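(* Let $T$ be a CPTP map and $\mathcal{H}_S$ an invariant subspace with orthogonal projection $\Pi_S$. Then $\mathcal{H}_S$ is GAS if and only if the sequence of subspaces $\mathrm{supp}(T^{*n}(\Pi_S))$, $n=0,1,2,\dots$, is strictly increasing until it equals $\mathcal{H}$ (i.e. there is $N$ such that $\mathrm{supp}(T^{*n}(\Pi_S))\subsetneq\mathrm{supp}(T^{*(n+1)}(\Pi_S))$ for $n<N$ and $\mathrm{supp}(T^{*N}(\Pi_S))=\mathcal{H}$).
   Context: $\mathcal{H}$ is a finite-dimensional complex Hilbert space; $T$ is CPTP: $T(\rho)=\sum_kM_k\rho M_k^\dagger$, $\sum_kM_k^\dagger M_k=I$, with dual $T^*(A)=\sum_kM_k^\dagger AM_k$, $T^{*0}=\mathrm{id}$. $\mathrm{supp}(X)=(\ker X)^\perp$. $\mathcal{H}_S$ is invariant if $\rho\ge0$, $\mathrm{supp}(\rho)\subseteq\mathcal{H}_S$ implies $\mathrm{supp}(T(\rho))\subseteq\mathcal{H}_S$; an invariant $\mathcal{H}_S$ is GAS if $\lim_n\|T^n(\rho)-\Pi_ST^n(\rho)\Pi_S\|=0$ for every density operator $\rho$. *)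

theory Defs
  imports "Jordan_Normal_Form.Schur_Decomposition" "Jordan_Normal_Form.Matrix_Kernel"
begin

text \<open>The Hilbert space is \<open>\<complex>^d\<close>, represented by \<open>carrier_vec d\<close>;
  operators are \<open>d \<times> d\<close> complex matrices. \<open>v \<bullet>c w\<close> is the inner product
  (conjugate-linear in the second argument), \<open>mat_adjoint\<close> is the conjugate transpose.\<close>

definition kraus_ops :: "nat \<Rightarrow> complex mat list \<Rightarrow> bool" where
  "kraus_ops d Ms \<longleftrightarrow> (\<forall>M \<in> set Ms. M \<in> carrier_mat d d) \<and>
     foldr (\<lambda>M acc. mat_adjoint M * M + acc) Ms (0\<^sub>m d d) = 1\<^sub>m d"

definition kraus_map :: "nat \<Rightarrow> complex mat list \<Rightarrow> complex mat \<Rightarrow> complex mat" where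
  "kraus_map d Ms \<rho> = foldr (\<lambda>M acc. M * \<rho> * mat_adjoint M + acc) Ms (0\<^sub>m d d)"

definition kraus_dual :: "nat \<Rightarrow> complex mat list \<Rightarrow> complex mat \<Rightarrow> complex mat" where
  "kraus_dual d Ms A = foldr (\<lambda>M acc. mat_adjoint M * A * M + acc) Ms (0\<^sub>m d d)"

definition mtrace :: "complex mat \<Rightarrow> complex" where
  "mtrace A = (\<Sum>i < dim_row A. A $$ (i, i))"

definition positive_op :: "nat \<Rightarrow> complex mat \<Rightarrow> bool" where
  "positive_op d A \<longleftrightarrow> A \<in> carrier_mat d d \<and>
     (\<forall>v \<in> carrier_vec d. (A *\<^sub>v v) \<bullet>c v \<in> \<real> \<and> Re ((A *\<^sub>v v) \<bullet>c v) \<ge> 0)"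

definition density_op :: "nat \<Rightarrow> complex mat \<Rightarrow> bool" where
  "density_op d \<rho> \<longleftrightarrow> positive_op d \<rho> \<and> mtrace \<rho> = 1"

definition supp :: "nat \<Rightarrow> complex mat \<Rightarrow> complex vec set" where
  "supp d X = {v \<in> carrier_vec d. \<forall>w \<in> mat_kernel X. v \<bullet>c w = 0}"

definition orth_proj :: "nat \<Rightarrow> complex mat \<Rightarrow> bool" where
  "orth_proj d P \<longleftrightarrow> P \<in> carrier_mat d d \<and> mat_adjoint P = P \<and> P * P = P"

definition proj_range :: "nat \<Rightarrow> complex mat \<Rightarrow> complex vec set" where
  "proj_range d P = {v \<in> carrier_vec d. P *\<^sub>v v = v}"

text \<open>Frobenius (Hilbert-Schmidt) norm; in finite dimension all norms are equivalent.\<close>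
definition mnorm :: "complex mat \<Rightarrow> real" where
  "mnorm A = sqrt (\<Sum>i < dim_row A. \<Sum>j < dim_col A. (cmod (A $$ (i, j)))\<^sup>2)"

definition invariant_sub :: "nat \<Rightarrow> complex mat list \<Rightarrow> complex vec set \<Rightarrow> bool" where
  "invariant_sub d Ms HS \<longleftrightarrow>
     (\<forall>\<rho>. positive_op d \<rho> \<and> supp d \<rho> \<subseteq> HS \<longrightarrow> supp d (kraus_map d Ms \<rho>) \<subseteq> HS)"

definition GAS :: "nat \<Rightarrow> complex mat list \<Rightarrow> complex mat \<Rightarrow> bool" where
  "GAS d Ms P \<longleftrightarrow> invariant_sub d Ms (proj_range d P) \<and>
     (\<forall>\<rho>. density_op d \<rho> \<longrightarrow>
        (\<lambda>n. mnorm ((kraus_map d Ms ^^ n) \<rho> - P * (kraus_map d Ms ^^ n) \<rho> * P)) \<longlonglongrightarrow> 0)"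

end

theory Submission
  imports Defs
begin

text \<open>
  Notation: T is the Kraus map, T* its dual, P the projection onto H_S and Q = 1 - P.
  The proof studies the positive operators P_n = T*^n(P) and B_n = T*^n(Q), which satisfy
  P_n + B_n = 1 as quadratic forms because T* is unital.

  (1) Invariance of H_S means that every Kraus operator maps H_S into itself; consequently
      B_n vanishes on H_S and the forms of B_n decrease, so the kernels of P_n decrease and
      their supports increase.
  (2) The kernel of P_(n+1) consists of the vectors w with M w in the kernel of P_n for every
      Kraus operator M.  Hence once two consecutive supports coincide the sequence is constant,
      and the supports increase strictly up to H iff some P_N is nondegenerate.
  (3) Trace duality gives tr(Q T^n(rho)) = tr(B_n rho).  If H_S is GAS this forces B_n to
      tend to 0, so some B_N has small entries and P_N is nondegenerate.
  (4) Conversely, a nondegenerate P_N satisfies P_N >= c with c > 0, hence B_N <= (1 - c) Q,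
      which iterates to B_(kN) <= (1 - c)^k Q; so B_n tends to 0, tr(Q T^n(rho)) tends to 0,
      and Cauchy-Schwarz bounds the off-diagonal blocks of T^n(rho): H_S is GAS.

  Thus GAS, "B_n tends to 0" and "some P_N is nondegenerate" are equivalent, and the
  theorem follows from (2).
\<close>

section \<open>Linear algebra on \<open>\<complex>\<^sup>d\<close>\<close>

lemma cscalar_prod_sum:
  "dim_vec (y :: complex vec) = n \<Longrightarrow> x \<bullet>c y = (\<Sum>i<n. x $ i * cnj (y $ i))"
  unfolding scalar_prod_def by (auto intro!: sum.cong simp: atLeast0LessThan)

lemma cscalar_prod_swap:
  "x \<in> carrier_vec n \<Longrightarrow> y \<in> carrier_vec n \<Longrightarrow> x \<bullet>c y = cnj (y \<bullet>c (x :: complex vec))"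
  by (simp add: cscalar_prod_sum[of _ n] mult.commute)

lemma row_scalar_prod_sum:
  "(A :: complex mat) \<in> carrier_mat n m \<Longrightarrow> x \<in> carrier_vec m \<Longrightarrow> i < n \<Longrightarrow>
   row A i \<bullet> x = (\<Sum>j<m. A $$ (i,j) * x $ j)"
  by (auto simp: scalar_prod_def atLeast0LessThan intro!: sum.cong)

lemma adjoint_carrier [simp]: "M \<in> carrier_mat n m \<Longrightarrow> mat_adjoint M \<in> carrier_mat m n"
  unfolding mat_adjoint_def by (auto simp: mat_of_rows_def)

lemma adjoint_dims [simp]: "dim_row (mat_adjoint M) = dim_col M" "dim_col (mat_adjoint M) = dim_row M"
  unfolding mat_adjoint_def by (auto simp: mat_of_rows_def)

lemma adjoint_adjoint [simp]: "mat_adjoint (mat_adjoint M) = (M :: complex mat)"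
  by (rule eq_matI) (auto simp: mat_adjoint_def mat_of_rows_def)

lemma adjoint_index [simp]:
  "i < dim_col (M :: complex mat) \<Longrightarrow> j < dim_row M \<Longrightarrow> mat_adjoint M $$ (i,j) = cnj (M $$ (j,i))"
  unfolding mat_adjoint_def by (auto simp: mat_of_rows_def)

lemma adjoint_cscalar_prod:
  assumes M: "(M :: complex mat) \<in> carrier_mat n m" and x: "x \<in> carrier_vec m" and y: "y \<in> carrier_vec n"
  shows "(M *\<^sub>v x) \<bullet>c y = x \<bullet>c (mat_adjoint M *\<^sub>v y)"
proof -
  have "(M *\<^sub>v x) \<bullet>c y = (\<Sum>i<n. (\<Sum>j<m. M $$ (i,j) * x $ j) * cnj (y $ i))"
    using M x y by (subst cscalar_prod_sum[of _ n]) (auto simp: row_scalar_prod_sum intro!: sum.cong)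
  also have "\<dots> = (\<Sum>j<m. x $ j * (\<Sum>i<n. M $$ (i,j) * cnj (y $ i)))"
    by (simp add: sum_distrib_left sum_distrib_right sum.swap[of _ "{..<n}"] mult_ac)
  also have "\<dots> = x \<bullet>c (mat_adjoint M *\<^sub>v y)"
    using M x y
    by (subst cscalar_prod_sum[of _ m]) (auto simp: row_scalar_prod_sum[of _ m n] mult_ac intro!: sum.cong)
  finally show ?thesis .
qed

definition sesq :: "complex mat \<Rightarrow> complex vec \<Rightarrow> complex vec \<Rightarrow> complex" where
  "sesq A x y = (A *\<^sub>v x) \<bullet>c y"

lemma sesq_sum:
  assumes "A \<in> carrier_mat n n" "x \<in> carrier_vec n" "y \<in> carrier_vec n"
  shows "sesq A x y = (\<Sum>i<n. \<Sum>j<n. A $$ (i,j) * x $ j * cnj (y $ i))"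
  using assms unfolding sesq_def
  by (subst cscalar_prod_sum[of _ n]) (auto simp: row_scalar_prod_sum sum_distrib_right intro!: sum.cong)

lemma sesq_add_left:
  assumes "A \<in> carrier_mat n n" "x \<in> carrier_vec n" "y \<in> carrier_vec n" "w \<in> carrier_vec n"
  shows "sesq A (x + y) w = sesq A x w + sesq A y w"
  using assms unfolding sesq_def
  by (simp add: mult_add_distrib_mat_vec[of A n n] add_scalar_prod_distrib[of _ n])

lemma sesq_add_right:
  assumes "A \<in> carrier_mat n n" "x \<in> carrier_vec n" "y \<in> carrier_vec n" "w \<in> carrier_vec n"
  shows "sesq A w (x + y) = sesq A w x + sesq A w y"
  using assms unfolding sesq_def
  by (simp add: conjugate_add_vec[of _ n] scalar_prod_add_distrib[of _ n])

lemma sesq_smult_left: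
  assumes "A \<in> carrier_mat n n" "x \<in> carrier_vec n" "w \<in> carrier_vec n"
  shows "sesq A (c \<cdot>\<^sub>v x) w = c * sesq A x w"
  using assms unfolding sesq_def by (simp add: mult_mat_vec)

lemma sesq_smult_right:
  assumes "A \<in> carrier_mat n n" "x \<in> carrier_vec n" "w \<in> carrier_vec n"
  shows "sesq A w (c \<cdot>\<^sub>v x) = cnj c * sesq A w x"
  using assms unfolding sesq_def by (simp add: conjugate_smult_vec)

lemma sesq_expand:
  assumes A: "A \<in> carrier_mat n n" and v: "x \<in> carrier_vec n" "y \<in> carrier_vec n"
  shows "sesq A (x + y) (x + y) = sesq A x x + sesq A x y + sesq A y x + sesq A y y"
  using v by (simp add: sesq_add_left[OF A] sesq_add_right[OF A])

lemma sesq_add_mat: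
  "A \<in> carrier_mat n n \<Longrightarrow> B \<in> carrier_mat n n \<Longrightarrow> x \<in> carrier_vec n \<Longrightarrow> y \<in> carrier_vec n \<Longrightarrow>
   sesq (A + B) x y = sesq A x y + sesq B x y"
  unfolding sesq_def by (simp add: add_mult_distrib_mat_vec add_scalar_prod_distrib[of _ n])

lemma sesq_minus_mat:
  "A \<in> carrier_mat n n \<Longrightarrow> B \<in> carrier_mat n n \<Longrightarrow> x \<in> carrier_vec n \<Longrightarrow> y \<in> carrier_vec n \<Longrightarrow>
   sesq (A - B) x y = sesq A x y - sesq B x y"
  unfolding sesq_def by (simp add: minus_mult_distrib_mat_vec[of _ n n] minus_scalar_prod_distrib[of _ n])

lemma sesq_zero_mat: "x \<in> carrier_vec n \<Longrightarrow> y \<in> carrier_vec n \<Longrightarrow> sesq (0\<^sub>m n n) x y = 0"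
  by (simp add: sesq_sum[of _ n])

lemma sesq_one: "x \<in> carrier_vec n \<Longrightarrow> sesq (1\<^sub>m n) x y = x \<bullet>c y"
  unfolding sesq_def by simp

lemma conjugate_unit_vec [simp]: "conjugate (unit_vec n i :: complex vec) = unit_vec n i"
  by (rule eq_vecI) (auto simp: unit_vec_def)

lemma sesq_unit_vec:
  assumes A: "A \<in> carrier_mat n n" and ij: "i < n" "j < n"
  shows "sesq A (unit_vec n j) (unit_vec n i) = A $$ (i,j)"
proof -
  have "sesq A (unit_vec n j) (unit_vec n i) = (A *\<^sub>v unit_vec n j) $ i"
    unfolding sesq_def using ij by simp
  also have "\<dots> = row A i \<bullet> unit_vec n j" using A ij by simp
  also have "\<dots> = A $$ (i,j)" using A ij by simp
  finally show ?thesis .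
qed

lemma sesq_conj_mat:
  assumes R: "R \<in> carrier_mat n n" and A: "A \<in> carrier_mat n n"
    and x: "x \<in> carrier_vec n" and y: "y \<in> carrier_vec n"
  shows "sesq (mat_adjoint R * A * R) x y = sesq A (R *\<^sub>v x) (R *\<^sub>v y)"
proof -
  have "(mat_adjoint R * A * R) *\<^sub>v x = mat_adjoint R *\<^sub>v (A *\<^sub>v (R *\<^sub>v x))"
    by (rule trans[OF assoc_mult_mat_vec[of "mat_adjoint R * A" n n R n x]
          assoc_mult_mat_vec[of "mat_adjoint R" n n A n "R *\<^sub>v x"]]) (use R A x in auto)
  thus ?thesis
    unfolding sesq_def using adjoint_cscalar_prod[of "mat_adjoint R" n n "A *\<^sub>v (R *\<^sub>v x)" y] R A x y
    by simp
qed

definition sqnorm :: "complex vec \<Rightarrow> real" where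
  "sqnorm v = Re (v \<bullet>c v)"

lemma cscalar_prod_self: "v \<bullet>c v = of_real (sqnorm (v :: complex vec))"
  using conjugate_square_ge_0_vec[of v] unfolding sqnorm_def
  by (auto simp: less_eq_complex_def complex_eq_iff)

lemma sqnorm_nonneg: "sqnorm v \<ge> 0"
  using conjugate_square_ge_0_vec[of v] unfolding sqnorm_def by (auto simp: less_eq_complex_def)

lemma sqnorm_eq_0: "v \<in> carrier_vec n \<Longrightarrow> sqnorm v = 0 \<longleftrightarrow> v = 0\<^sub>v n"
  using cscalar_prod_self[of v] conjugate_square_eq_0_vec[of v n] by auto

lemma sqnorm_sum: "v \<in> carrier_vec n \<Longrightarrow> sqnorm v = (\<Sum>i<n. (cmod (v $ i))\<^sup>2)"
proof -
  assume v: "v \<in> carrier_vec n"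
  have "v \<bullet>c v = (\<Sum>i<n. of_real ((cmod (v $ i))\<^sup>2))"
    using v by (subst cscalar_prod_sum[of _ n]) (auto simp: complex_norm_square[symmetric])
  thus ?thesis unfolding sqnorm_def by simp
qed

lemma component_product_le_sqnorm:
  assumes v: "v \<in> carrier_vec n" and i: "i < n" and j: "j < n"
  shows "cmod (v $ i) * cmod (v $ j) \<le> sqnorm v"
proof -
  have sq: "(cmod (v $ k))\<^sup>2 \<le> sqnorm v" if "k < n" for k
    unfolding sqnorm_sum[OF v] by (rule member_le_sum) (use that in auto)
  have "cmod (v $ i) * cmod (v $ j) \<le> ((cmod (v $ i))\<^sup>2 + (cmod (v $ j))\<^sup>2) / 2"
    using sum_squares_bound[of "cmod (v $ i)" "cmod (v $ j)"] by (simp add: power2_eq_square)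
  also have "\<dots> \<le> sqnorm v" using sq[OF i] sq[OF j] by simp
  finally show ?thesis .
qed

lemma sesq_le_entry_sum:
  assumes X: "X \<in> carrier_mat n n" and v: "v \<in> carrier_vec n"
  shows "cmod (sesq X v v) \<le> (\<Sum>i<n. \<Sum>j<n. cmod (X $$ (i,j))) * sqnorm v"
proof -
  have "cmod (sesq X v v) \<le> (\<Sum>i<n. \<Sum>j<n. cmod (X $$ (i,j) * v $ j * cnj (v $ i)))"
    unfolding sesq_sum[OF X v v] by (rule order_trans[OF norm_sum sum_mono[OF norm_sum]])
  also have "\<dots> \<le> (\<Sum>i<n. \<Sum>j<n. cmod (X $$ (i,j)) * sqnorm v)"
    using component_product_le_sqnorm[OF v]
    by (intro sum_mono) (auto simp: norm_mult mult.assoc intro!: mult_left_mono)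
  also have "\<dots> = (\<Sum>i<n. \<Sum>j<n. cmod (X $$ (i,j))) * sqnorm v"
    by (simp add: sum_distrib_right)
  finally show ?thesis .
qed

lemma positive_opI:
  "A \<in> carrier_mat n n \<Longrightarrow> (\<And>v. v \<in> carrier_vec n \<Longrightarrow> sesq A v v \<in> \<real> \<and> Re (sesq A v v) \<ge> 0) \<Longrightarrow>
   positive_op n A"
  unfolding positive_op_def sesq_def by auto

lemma positive_op_carrier: "positive_op n A \<Longrightarrow> A \<in> carrier_mat n n"
  unfolding positive_op_def by auto

lemma positive_sesq: "positive_op n A \<Longrightarrow> x \<in> carrier_vec n \<Longrightarrow> sesq A x x \<in> \<real> \<and> Re (sesq A x x) \<ge> 0"
  unfolding positive_op_def sesq_def by auto

lemma positive_sesq_Im: "positive_op n A \<Longrightarrow> x \<in> carrier_vec n \<Longrightarrow> Im (sesq A x x) = 0"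
  unfolding positive_op_def sesq_def by (auto simp: Reals_def)

lemma positive_sesq_nonneg: "positive_op n A \<Longrightarrow> x \<in> carrier_vec n \<Longrightarrow> Re (sesq A x x) \<ge> 0"
  using positive_sesq by auto

text \<open>Positive operators are Hermitian (polarization with \<open>x + y\<close> and \<open>x + i y\<close>).\<close>
lemma positive_hermitian:
  assumes P: "positive_op n A" and v: "x \<in> carrier_vec n" "y \<in> carrier_vec n"
  shows "sesq A y x = cnj (sesq A x y)"
proof -
  have A: "A \<in> carrier_mat n n" using P by (rule positive_op_carrier)
  let ?a = "sesq A x y" and ?b = "sesq A y x"
  have iy: "\<i> \<cdot>\<^sub>v y \<in> carrier_vec n" using v by auto
  have "Im (sesq A (x + y) (x + y)) = 0" using P v by (intro positive_sesq_Im) auto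
  hence 1: "Im ?a + Im ?b = 0"
    using sesq_expand[OF A v] positive_sesq_Im[OF P v(1)] positive_sesq_Im[OF P v(2)] by simp
  have "Im (sesq A (x + \<i> \<cdot>\<^sub>v y) (x + \<i> \<cdot>\<^sub>v y)) = 0" using P v by (intro positive_sesq_Im) auto
  hence "Im (sesq A x x + cnj \<i> * ?a + \<i> * ?b + \<i> * (cnj \<i> * sesq A y y)) = 0"
    using sesq_expand[OF A v(1) iy] sesq_smult_left[OF A v(2) v(1)] sesq_smult_right[OF A v(2) v(1)]
      sesq_smult_left[OF A v(2) iy] sesq_smult_right[OF A v(2) v(2)] by simp
  hence 2: "Re ?b - Re ?a = 0"
    using positive_sesq_Im[OF P v(1)] positive_sesq_Im[OF P v(2)] by simp
  show ?thesis using 1 2 by (simp add: complex_eq_iff)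
qed

lemma positive_sesq_line:
  assumes P: "positive_op n A" and v: "x \<in> carrier_vec n" "y \<in> carrier_vec n"
  shows "Re (sesq A (x + l \<cdot>\<^sub>v y) (x + l \<cdot>\<^sub>v y))
    = Re (sesq A x x) + 2 * Re (cnj l * sesq A x y) + (cmod l)\<^sup>2 * Re (sesq A y y)"
proof -
  have A: "A \<in> carrier_mat n n" using P by (rule positive_op_carrier)
  have ly: "l \<cdot>\<^sub>v y \<in> carrier_vec n" using v by auto
  have e: "sesq A (x + l \<cdot>\<^sub>v y) (x + l \<cdot>\<^sub>v y)
      = sesq A x x + cnj l * sesq A x y + l * cnj (sesq A x y) + (l * cnj l) * sesq A y y"
    unfolding sesq_expand[OF A v(1) ly] sesq_smult_left[OF A v(2) v(1)] sesq_smult_right[OF A v(2) v(1)]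
      sesq_smult_left[OF A v(2) ly] sesq_smult_right[OF A v(2) v(2)] positive_hermitian[OF P v]
    by (simp add: mult.assoc)
  have "Re ((l * cnj l) * sesq A y y) = (cmod l)\<^sup>2 * Re (sesq A y y)"
    using positive_sesq_Im[OF P v(2)] by (simp add: complex_norm_square[symmetric])
  thus ?thesis unfolding e by simp
qed

text \<open>A real quadratic \<open>a - 2 t b + t\<^sup>2 b c\<close> that is nonnegative for all \<open>t\<close> has \<open>b \<le> a c\<close>
  (evaluate at \<open>t = 1/c\<close>, or at a large \<open>t\<close> when \<open>c = 0\<close>).\<close>
lemma quadratic_nonneg_bound:
  fixes a b c :: real
  assumes a: "a \<ge> 0" and b: "b \<ge> 0" and c: "c \<ge> 0"
    and nonneg: "\<And>t. a - 2 * t * b + t\<^sup>2 * b * c \<ge> 0"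
  shows "b \<le> a * c"
proof (cases "c = 0")
  case True
  show ?thesis
  proof (rule ccontr)
    assume "\<not> ?thesis"
    hence "b > 0" using True a by auto
    moreover have "a - 2 * ((a + 1) / (2 * b)) * b + ((a + 1) / (2 * b))\<^sup>2 * b * c \<ge> 0"
      by (rule nonneg)
    ultimately show False using True by simp
  qed
next
  case False
  hence cp: "c > 0" using c by simp
  have "a - 2 * (1/c) * b + (1/c)\<^sup>2 * b * c \<ge> 0" by (rule nonneg)
  moreover have "(1/c)\<^sup>2 * b * c = (1/c) * b" using cp by (simp add: power2_eq_square)
  ultimately have "(1/c) * b \<le> a" by simp
  thus ?thesis using cp by (simp add: divide_simps mult.commute)
qed

lemma positive_cauchy_schwarz:
  assumes P: "positive_op n A" and v: "x \<in> carrier_vec n" "y \<in> carrier_vec n"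
  shows "(cmod (sesq A x y))\<^sup>2 \<le> Re (sesq A x x) * Re (sesq A y y)"
proof (rule quadratic_nonneg_bound)
  define a where "a = Re (sesq A x x)"
  define c where "c = Re (sesq A y y)"
  define b where "b = sesq A x y"
  show "Re (sesq A x x) \<ge> 0" "Re (sesq A y y) \<ge> 0" using positive_sesq_nonneg[OF P] v by auto
  show "(cmod (sesq A x y))\<^sup>2 \<ge> 0" by simp
  fix t :: real
  have "0 \<le> Re (sesq A (x + (- (of_real t * b)) \<cdot>\<^sub>v y) (x + (- (of_real t * b)) \<cdot>\<^sub>v y))"
    using v by (intro positive_sesq_nonneg[OF P]) auto
  also have "\<dots> = a + 2 * Re (cnj (- (of_real t * b)) * b) + (cmod (- (of_real t * b)))\<^sup>2 * c"
    unfolding positive_sesq_line[OF P v] a_def b_def c_def ..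
  also have "cnj (- (of_real t * b)) * b = - (of_real t * (cnj b * b))"
    by (simp add: mult.commute mult.left_commute)
  also have "cnj b * b = of_real ((cmod b)\<^sup>2)"
    by (simp add: complex_norm_square[symmetric] mult.commute)
  also have "(cmod (- (of_real t * b)))\<^sup>2 = t\<^sup>2 * (cmod b)\<^sup>2"
    by (simp add: norm_mult power_mult_distrib)
  finally have "0 \<le> a + 2 * (- (t * (cmod b)\<^sup>2)) + t\<^sup>2 * (cmod b)\<^sup>2 * c"
    by (simp del: of_real_power)
  thus "Re (sesq A x x) - 2 * t * (cmod (sesq A x y))\<^sup>2 + t\<^sup>2 * (cmod (sesq A x y))\<^sup>2 * Re (sesq A y y) \<ge> 0"
    unfolding a_def b_def c_def by linarith
qed

lemma positive_sesq_vanish: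
  assumes P: "positive_op n A" and v: "x \<in> carrier_vec n" "s \<in> carrier_vec n"
    and z: "Re (sesq A s s) = 0"
  shows "sesq A x s = 0" "sesq A s x = 0"
proof -
  have "(cmod (sesq A x s))\<^sup>2 \<le> 0" using positive_cauchy_schwarz[OF P v] z by simp
  thus 1: "sesq A x s = 0" by simp
  show "sesq A s x = 0" using positive_hermitian[OF P v] 1 by simp
qed

lemma positive_kernel_iff:
  assumes P: "positive_op n A" and w: "w \<in> carrier_vec n"
  shows "A *\<^sub>v w = 0\<^sub>v n \<longleftrightarrow> Re (sesq A w w) = 0"
proof
  assume z: "Re (sesq A w w) = 0"
  have Aw: "A *\<^sub>v w \<in> carrier_vec n" using positive_op_carrier[OF P] w by auto
  have "sesq A w (A *\<^sub>v w) = 0" by (rule positive_sesq_vanish(2)[OF P Aw w z])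
  thus "A *\<^sub>v w = 0\<^sub>v n" using Aw unfolding sesq_def by simp
qed (use w in \<open>simp add: sesq_def\<close>)

lemma positive_one: "positive_op n (1\<^sub>m n)"
  by (rule positive_opI) (auto simp: sesq_one cscalar_prod_self sqnorm_nonneg)

lemma cscalar_cauchy_schwarz:
  "x \<in> carrier_vec n \<Longrightarrow> y \<in> carrier_vec n \<Longrightarrow> (cmod (x \<bullet>c y))\<^sup>2 \<le> sqnorm x * sqnorm y"
  using positive_cauchy_schwarz[OF positive_one, of x n y] by (simp add: sesq_one sqnorm_def)

lemma positive_entry_bound:
  assumes X: "positive_op n X" and i: "i < n" and j: "j < n"
  shows "(cmod (X $$ (i,j)))\<^sup>2 \<le> Re (X $$ (j,j)) * Re (X $$ (i,i))"
  using positive_cauchy_schwarz[OF X, of "unit_vec n j" "unit_vec n i"] i j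
  by (simp add: sesq_unit_vec[OF positive_op_carrier[OF X]])

lemma positive_entries_tendsto_0:
  assumes X: "\<And>k. positive_op n (X k)"
    and diag: "\<And>i. i < n \<Longrightarrow> (\<lambda>k. Re (X k $$ (i,i))) \<longlonglongrightarrow> 0"
    and i: "i < n" and j: "j < n"
  shows "(\<lambda>k. X k $$ (i,j)) \<longlonglongrightarrow> 0"
proof -
  have "(\<lambda>k. sqrt (Re (X k $$ (j,j)) * Re (X k $$ (i,i)))) \<longlonglongrightarrow> sqrt (0 * 0)"
    by (intro tendsto_real_sqrt tendsto_mult diag i j)
  hence bound: "(\<lambda>k. sqrt (Re (X k $$ (j,j)) * Re (X k $$ (i,i)))) \<longlonglongrightarrow> 0" by simp
  have "(\<lambda>k. norm (X k $$ (i,j))) \<longlonglongrightarrow> 0"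
  proof (rule tendsto_sandwich[OF _ _ tendsto_const bound])
    show "\<forall>\<^sub>F k in sequentially. norm (X k $$ (i,j)) \<le> sqrt (Re (X k $$ (j,j)) * Re (X k $$ (i,i)))"
      using positive_entry_bound[OF X i j] by (intro always_eventually allI real_le_rsqrt) simp
  qed simp
  thus ?thesis by (simp add: tendsto_norm_zero_iff)
qed

text \<open>For a positive (hence Hermitian) operator the kernel is the orthogonal complement of the
  support, so kernel and support determine each other.\<close>
lemma positive_kernel_supp:
  assumes P: "positive_op n A"
  shows "mat_kernel A = {w \<in> carrier_vec n. \<forall>v\<in>supp n A. v \<bullet>c w = 0}"
proof
  have A: "A \<in> carrier_mat n n" using P by (rule positive_op_carrier)
  show "mat_kernel A \<subseteq> {w \<in> carrier_vec n. \<forall>v\<in>supp n A. v \<bullet>c w = 0}"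
    using mat_kernelD[OF A] unfolding supp_def by auto
  show "{w \<in> carrier_vec n. \<forall>v\<in>supp n A. v \<bullet>c w = 0} \<subseteq> mat_kernel A"
  proof
    fix w assume "w \<in> {w \<in> carrier_vec n. \<forall>v\<in>supp n A. v \<bullet>c w = 0}"
    hence w: "w \<in> carrier_vec n" and perp: "\<forall>v\<in>supp n A. v \<bullet>c w = 0" by auto
    have Aw: "A *\<^sub>v w \<in> carrier_vec n" using A w by simp
    have "A *\<^sub>v w \<in> supp n A"
      unfolding supp_def
    proof (intro CollectI conjI ballI Aw)
      fix x assume "x \<in> mat_kernel A"
      hence x: "x \<in> carrier_vec n" and Ax: "A *\<^sub>v x = 0\<^sub>v n" using mat_kernelD[OF A] by auto
      have "(A *\<^sub>v w) \<bullet>c x = cnj (sesq A x w)"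
        unfolding sesq_def[symmetric] by (rule positive_hermitian[OF P x w])
      thus "(A *\<^sub>v w) \<bullet>c x = 0" unfolding sesq_def Ax using w by simp
    qed
    hence "Re (sesq A w w) = 0" using perp unfolding sesq_def by auto
    hence "A *\<^sub>v w = 0\<^sub>v n" using positive_kernel_iff[OF P w] by simp
    thus "w \<in> mat_kernel A" by (rule mat_kernelI[OF A w])
  qed
qed

lemma supp_antimono: "mat_kernel B \<subseteq> mat_kernel A \<Longrightarrow> supp n A \<subseteq> supp n B"
  unfolding supp_def by auto

lemma positive_supp_eq_iff:
  "positive_op n A \<Longrightarrow> positive_op n B \<Longrightarrow> supp n A = supp n B \<longleftrightarrow> mat_kernel A = mat_kernel B"
  using positive_kernel_supp[of n A] positive_kernel_supp[of n B] supp_antimono[of A B n]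
    supp_antimono[of B A n] by auto

definition nondegenerate :: "nat \<Rightarrow> complex mat \<Rightarrow> bool" where
  "nondegenerate n A \<longleftrightarrow> (\<forall>w\<in>carrier_vec n. A *\<^sub>v w = 0\<^sub>v n \<longrightarrow> w = 0\<^sub>v n)"

lemma supp_full_iff:
  assumes A: "A \<in> carrier_mat n n"
  shows "supp n A = carrier_vec n \<longleftrightarrow> nondegenerate n A"
proof
  assume full: "supp n A = carrier_vec n"
  show "nondegenerate n A" unfolding nondegenerate_def
  proof (intro ballI impI)
    fix w assume w: "w \<in> carrier_vec n" and "A *\<^sub>v w = 0\<^sub>v n"
    hence "w \<in> mat_kernel A" by (rule mat_kernelI[OF A])
    moreover have "w \<in> supp n A" using full w by simp
    ultimately have "w \<bullet>c w = 0" unfolding supp_def by auto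
    thus "w = 0\<^sub>v n" using w by simp
  qed
next
  assume "nondegenerate n A"
  hence "w = 0\<^sub>v n" if "w \<in> mat_kernel A" for w
    using that mat_kernelD[OF A] unfolding nondegenerate_def by auto
  hence "v \<bullet>c w = 0" if "v \<in> carrier_vec n" "w \<in> mat_kernel A" for v w
    using that by (metis conjugate_zero_vec scalar_prod_right_zero)
  thus "supp n A = carrier_vec n" unfolding supp_def by auto
qed

lemma sqnorm_mult_vec_le:
  assumes B: "B \<in> carrier_mat n n"
  obtains C where "C \<ge> 0" and "\<And>v. v \<in> carrier_vec n \<Longrightarrow> sqnorm (B *\<^sub>v v) \<le> C * sqnorm v"
proof
  have BaB: "mat_adjoint B * B \<in> carrier_mat n n" using B by auto
  define C where "C = (\<Sum>i<n. \<Sum>j<n. cmod ((mat_adjoint B * B) $$ (i,j)))"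
  show "C \<ge> 0" unfolding C_def by (intro sum_nonneg) auto
  fix v :: "complex vec" assume v: "v \<in> carrier_vec n"
  have "sqnorm (B *\<^sub>v v) = Re (sesq (mat_adjoint B * 1\<^sub>m n * B) v v)"
    using sesq_conj_mat[OF B one_carrier_mat v v] B v by (simp add: sesq_one sqnorm_def)
  also have "\<dots> \<le> cmod (sesq (mat_adjoint B * B) v v)" using B by (simp add: complex_Re_le_cmod)
  also have "\<dots> \<le> C * sqnorm v" unfolding C_def by (rule sesq_le_entry_sum[OF BaB v])
  finally show "sqnorm (B *\<^sub>v v) \<le> C * sqnorm v" .
qed

text \<open>A positive operator with a right inverse \<open>B\<close>, \<open>|B v|\<^sup>2 \<le> C |v|\<^sup>2\<close>, is bounded below:
  Cauchy-Schwarz for the form of \<open>A\<close> gives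
  \<open>|v|\<^sup>4 = \<langle>A B v, v\<rangle>\<^sup>2 \<le> \<langle>A B v, B v\<rangle> \<langle>A v, v\<rangle> = \<langle>v, B v\<rangle> \<langle>A v, v\<rangle> \<le> \<surd>C |v|\<^sup>2 \<langle>A v, v\<rangle>\<close>.\<close>
lemma positive_right_inverse_bound:
  assumes Pos: "positive_op n A" and B: "B \<in> carrier_mat n n" and AB: "A * B = 1\<^sub>m n"
    and C0: "C \<ge> 0" and nB: "\<And>v. v \<in> carrier_vec n \<Longrightarrow> sqnorm (B *\<^sub>v v) \<le> C * sqnorm v"
    and v: "v \<in> carrier_vec n"
  shows "sqnorm v \<le> (sqrt C + 1) * Re (sesq A v v)"
proof -
  have A: "A \<in> carrier_mat n n" using Pos by (rule positive_op_carrier)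
  have Bv: "B *\<^sub>v v \<in> carrier_vec n" using B v by simp
  define a where "a = sqnorm v"
  define q where "q = Re (sesq A v v)"
  have a0: "a \<ge> 0" unfolding a_def by (rule sqnorm_nonneg)
  have q0: "q \<ge> 0" unfolding q_def using positive_sesq_nonneg[OF Pos v] .
  have ABv: "A *\<^sub>v (B *\<^sub>v v) = v" using assoc_mult_mat_vec[OF A B v] AB v by simp
  have "Re (sesq A (B *\<^sub>v v) (B *\<^sub>v v)) \<le> cmod (v \<bullet>c (B *\<^sub>v v))"
    unfolding sesq_def ABv by (rule complex_Re_le_cmod)
  also have "\<dots> \<le> sqrt (a * (C * a))"
    using cscalar_cauchy_schwarz[OF v Bv] nB[OF v] a0 unfolding a_def
    by (intro real_le_rsqrt) (meson mult_left_mono order_trans sqnorm_nonneg)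
  also have "\<dots> = sqrt C * a" using a0 C0
    by (simp add: real_sqrt_mult power2_eq_square[symmetric] mult.commute mult.left_commute)
  finally have rK: "Re (sesq A (B *\<^sub>v v) (B *\<^sub>v v)) \<le> sqrt C * a" .
  have "a = Re (sesq A (B *\<^sub>v v) v)" unfolding sesq_def ABv a_def sqnorm_def ..
  hence "a\<^sup>2 \<le> (cmod (sesq A (B *\<^sub>v v) v))\<^sup>2"
    using complex_Re_le_cmod[of "sesq A (B *\<^sub>v v) v"] a0 by (simp add: power_mono)
  also have "\<dots> \<le> Re (sesq A (B *\<^sub>v v) (B *\<^sub>v v)) * q"
    unfolding q_def by (rule positive_cauchy_schwarz[OF Pos Bv v])
  also have "\<dots> \<le> (sqrt C * a) * q" using rK q0 by (rule mult_right_mono)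
  finally have aa: "a * a \<le> (sqrt C * a) * q" by (simp add: power2_eq_square)
  have "a \<le> (sqrt C + 1) * q"
  proof (cases "a = 0")
    case False
    hence "a \<le> sqrt C * q" using aa a0 by (simp add: mult.assoc mult.left_commute[of a])
    thus ?thesis using q0 by (simp add: distrib_right)
  qed (use q0 C0 in simp)
  thus ?thesis unfolding a_def q_def .
qed

lemma nondegenerate_lower_bound:
  assumes Pos: "positive_op n A" and nd: "nondegenerate n A"
  shows "\<exists>c>0. \<forall>v\<in>carrier_vec n. c * sqnorm v \<le> Re (sesq A v v)"
proof -
  have A: "A \<in> carrier_mat n n" using Pos by (rule positive_op_carrier)
  have "det A \<noteq> 0" using det_0_iff_vec_prod_zero[OF A] nd unfolding nondegenerate_def by blast
  from det_non_zero_imp_unit[OF A this, of "()"]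
  obtain B where B: "B \<in> carrier_mat n n" and AB: "A * B = 1\<^sub>m n"
    unfolding Units_def ring_mat_simps by auto
  obtain C where C0: "C \<ge> 0" and nB: "\<And>v. v \<in> carrier_vec n \<Longrightarrow> sqnorm (B *\<^sub>v v) \<le> C * sqnorm v"
    using sqnorm_mult_vec_le[OF B] by blast
  have K: "sqrt C + 1 > 0" using C0 by (simp add: add_nonneg_pos)
  show ?thesis
  proof (intro exI[of _ "1 / (sqrt C + 1)"] conjI ballI)
    show "1 / (sqrt C + 1) > 0" using K by simp
    fix v :: "complex vec" assume "v \<in> carrier_vec n"
    thus "1 / (sqrt C + 1) * sqnorm v \<le> Re (sesq A v v)"
      using positive_right_inverse_bound[OF Pos B AB C0 nB] K by (simp add: field_simps)
  qed
qed

lemma mtrace_mult: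
  assumes "A \<in> carrier_mat n m" "B \<in> carrier_mat m n"
  shows "mtrace (A * B) = (\<Sum>i<n. \<Sum>j<m. A $$ (i,j) * B $$ (j,i))"
  unfolding mtrace_def using assms by (auto simp: scalar_prod_def atLeast0LessThan intro!: sum.cong)

lemma mtrace_comm:
  assumes "A \<in> carrier_mat n m" "B \<in> carrier_mat m n"
  shows "mtrace (A * B) = mtrace (B * A)"
  unfolding mtrace_mult[OF assms] mtrace_mult[OF assms(2,1)]
  by (subst sum.swap) (simp add: mult.commute)

lemma mtrace_add: "A \<in> carrier_mat n n \<Longrightarrow> B \<in> carrier_mat n n \<Longrightarrow> mtrace (A + B) = mtrace A + mtrace B"
  unfolding mtrace_def by (simp add: sum.distrib)

lemma mtrace_minus: "A \<in> carrier_mat n n \<Longrightarrow> B \<in> carrier_mat n n \<Longrightarrow> mtrace (A - B) = mtrace A - mtrace B"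
  unfolding mtrace_def by (simp add: sum_subtractf)

lemma mtrace_sesq: "A \<in> carrier_mat n n \<Longrightarrow> mtrace A = (\<Sum>i<n. sesq A (unit_vec n i) (unit_vec n i))"
  unfolding mtrace_def by (auto simp: sesq_unit_vec intro!: sum.cong)

lemma mnorm_nonneg: "mnorm Y \<ge> 0"
  unfolding mnorm_def by (intro real_sqrt_ge_zero sum_nonneg) auto

lemma entry_le_mnorm:
  assumes Y: "Y \<in> carrier_mat n n" and i: "i < n" and j: "j < n"
  shows "cmod (Y $$ (i,j)) \<le> mnorm Y"
proof -
  have "(cmod (Y $$ (i,j)))\<^sup>2 \<le> (\<Sum>j'<n. (cmod (Y $$ (i,j')))\<^sup>2)"
    by (rule member_le_sum) (use j in auto)
  also have "\<dots> \<le> (\<Sum>i'<n. \<Sum>j'<n. (cmod (Y $$ (i',j')))\<^sup>2)"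
    by (rule member_le_sum[where f = "\<lambda>i'. \<Sum>j'<n. (cmod (Y $$ (i',j')))\<^sup>2"])
       (use i in \<open>auto intro: sum_nonneg\<close>)
  finally have "sqrt ((cmod (Y $$ (i,j)))\<^sup>2) \<le> mnorm Y"
    unfolding mnorm_def using Y by (intro real_sqrt_le_mono) auto
  thus ?thesis by simp
qed

lemma trace_le_mnorm: "Y \<in> carrier_mat n n \<Longrightarrow> cmod (mtrace Y) \<le> real n * mnorm Y"
  unfolding mtrace_def
  using norm_sum[of "\<lambda>i. Y $$ (i,i)" "{..<n}"] sum_mono[of "{..<n}" "\<lambda>i. cmod (Y $$ (i,i))" "\<lambda>_. mnorm Y"]
    entry_le_mnorm[of Y n] by auto

lemma mnorm_tendsto_0:
  assumes Y: "\<And>k. Y k \<in> carrier_mat n n"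
    and ent: "\<And>i j. i < n \<Longrightarrow> j < n \<Longrightarrow> (\<lambda>k. Y k $$ (i,j)) \<longlonglongrightarrow> 0"
  shows "(\<lambda>k. mnorm (Y k)) \<longlonglongrightarrow> 0"
proof -
  have "(\<lambda>k. sqrt (\<Sum>i<n. \<Sum>j<n. (cmod (Y k $$ (i,j)))\<^sup>2)) \<longlonglongrightarrow> sqrt (\<Sum>i<n. \<Sum>j<n. 0\<^sup>2)"
    using ent by (intro tendsto_real_sqrt tendsto_sum tendsto_power) (auto simp: tendsto_norm_zero_iff)
  thus ?thesis unfolding mnorm_def by (simp add: carrier_matD[OF Y])
qed

definition rank1 :: "nat \<Rightarrow> complex vec \<Rightarrow> complex mat" where
  "rank1 n v = mat n n (\<lambda>(i,j). v $ i * cnj (v $ j))"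

lemma rank1_carrier [simp]: "rank1 n v \<in> carrier_mat n n"
  unfolding rank1_def by simp

lemma rank1_sesq:
  assumes v: "v \<in> carrier_vec n" and w: "w \<in> carrier_vec n"
  shows "sesq (rank1 n v) w w = of_real ((cmod (w \<bullet>c v))\<^sup>2)"
proof -
  have "rank1 n v *\<^sub>v w = (w \<bullet>c v) \<cdot>\<^sub>v v"
  proof (rule eq_vecI)
    fix i assume "i < dim_vec ((w \<bullet>c v) \<cdot>\<^sub>v v)"
    hence i: "i < n" using v by simp
    have "(rank1 n v *\<^sub>v w) $ i = (\<Sum>j<n. v $ i * cnj (v $ j) * w $ j)"
      using i w by (simp add: rank1_def scalar_prod_def atLeast0LessThan)
    also have "\<dots> = v $ i * (w \<bullet>c v)"
      using v by (simp add: cscalar_prod_sum[of _ n] sum_distrib_left mult_ac)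
    finally show "(rank1 n v *\<^sub>v w) $ i = ((w \<bullet>c v) \<cdot>\<^sub>v v) $ i" using i v by (simp add: mult.commute)
  qed (use v in \<open>auto simp: rank1_def\<close>)
  hence "sesq (rank1 n v) w w = (w \<bullet>c v) * cnj (w \<bullet>c v)"
    unfolding sesq_def using v w cscalar_prod_swap[OF v w] by simp
  thus ?thesis by (simp add: complex_norm_square[symmetric])
qed

lemma rank1_positive: "v \<in> carrier_vec n \<Longrightarrow> positive_op n (rank1 n v)"
  by (rule positive_opI) (auto simp: rank1_sesq)

lemma rank1_unit_vec_density:
  assumes i: "i < n"
  shows "density_op n (rank1 n (unit_vec n i))"
proof -
  have "mtrace (rank1 n (unit_vec n i)) = (\<Sum>a<n. if a = i then 1 else 0)"
    unfolding mtrace_def by (rule sum.cong) (auto simp: rank1_def unit_vec_def)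
  thus ?thesis unfolding density_op_def using rank1_positive[of "unit_vec n i" n] i by simp
qed

lemma mtrace_mult_rank1_unit_vec:
  assumes B: "B \<in> carrier_mat n n" and i: "i < n"
  shows "mtrace (B * rank1 n (unit_vec n i)) = B $$ (i,i)"
proof -
  have "mtrace (B * rank1 n (unit_vec n i))
      = (\<Sum>a<n. \<Sum>b<n. if b = i then (if a = i then B $$ (a,b) else 0) else 0)"
    unfolding mtrace_mult[OF B rank1_carrier] by (intro sum.cong refl) (auto simp: rank1_def unit_vec_def)
  also have "\<dots> = B $$ (i,i)" using i by simp
  finally show ?thesis .
qed

lemma orth_proj_carrier: "orth_proj n R \<Longrightarrow> R \<in> carrier_mat n n"
  unfolding orth_proj_def by auto

lemma orth_proj_one: "orth_proj n (1\<^sub>m n)"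
proof -
  have "mat_adjoint (1\<^sub>m n) = (1\<^sub>m n :: complex mat)" by (rule eq_matI) auto
  thus ?thesis unfolding orth_proj_def by simp
qed

lemma orth_proj_sandwich:
  assumes R: "orth_proj n R" and X: "X \<in> carrier_mat n n"
    and x: "x \<in> carrier_vec n" and y: "y \<in> carrier_vec n"
  shows "sesq (R * X * R) x y = sesq X (R *\<^sub>v x) (R *\<^sub>v y)"
  using sesq_conj_mat[OF orth_proj_carrier[OF R] X x y] R unfolding orth_proj_def by simp

lemma orth_proj_sesq:
  assumes R: "orth_proj n R" and x: "x \<in> carrier_vec n"
  shows "sesq R x x = of_real (sqnorm (R *\<^sub>v x))"
proof -
  have Rc: "R \<in> carrier_mat n n" using R by (rule orth_proj_carrier)
  have "R = R * 1\<^sub>m n * R" using R Rc unfolding orth_proj_def by simp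
  hence "sesq R x x = sesq (1\<^sub>m n) (R *\<^sub>v x) (R *\<^sub>v x)"
    using orth_proj_sandwich[OF R one_carrier_mat x x] by simp
  thus ?thesis using Rc x by (simp add: sesq_one cscalar_prod_self)
qed

lemma orth_proj_positive: "orth_proj n R \<Longrightarrow> positive_op n R"
  by (rule positive_opI) (auto simp: orth_proj_carrier orth_proj_sesq sqnorm_nonneg)

lemma orth_proj_complement:
  assumes R: "orth_proj n R"
  shows "orth_proj n (1\<^sub>m n - R)"
proof -
  have Rc: "R \<in> carrier_mat n n" and adj: "mat_adjoint R = R" and idem: "R * R = R"
    using R unfolding orth_proj_def by auto
  have "mat_adjoint (1\<^sub>m n - R) = 1\<^sub>m n - R"
  proof (rule eq_matI)
    fix i j assume "i < dim_row (1\<^sub>m n - R)" "j < dim_col (1\<^sub>m n - R)"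
    hence ij: "i < n" "j < n" using Rc by auto
    have "cnj (R $$ (j,i)) = R $$ (i,j)"
      using adjoint_index[of i R j] ij Rc adj by simp
    thus "mat_adjoint (1\<^sub>m n - R) $$ (i,j) = (1\<^sub>m n - R) $$ (i,j)" using ij Rc by simp
  qed (use Rc in auto)
  moreover have "R * (1\<^sub>m n - R) = 0\<^sub>m n n"
  proof -
    have "R * (1\<^sub>m n - R) = R * 1\<^sub>m n - R * R"
      by (rule mult_minus_distrib_mat) (use Rc in auto)
    thus ?thesis using Rc idem by (simp add: minus_r_inv_mat)
  qed
  moreover have "(1\<^sub>m n - R) * (1\<^sub>m n - R) = 1\<^sub>m n * (1\<^sub>m n - R) - R * (1\<^sub>m n - R)"
    by (rule minus_mult_distrib_mat) (use Rc in auto)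
  ultimately show ?thesis using Rc unfolding orth_proj_def by auto
qed

text \<open>For positive \<open>X\<close>, the form of \<open>X\<close> on \<open>R e\<^sub>k\<close> is a summand of \<open>tr (R X) = tr (R X R)\<close>.\<close>
lemma orth_proj_sesq_le_trace:
  assumes R: "orth_proj n R" and X: "positive_op n X" and k: "k < n"
  shows "Re (sesq X (R *\<^sub>v unit_vec n k) (R *\<^sub>v unit_vec n k)) \<le> Re (mtrace (R * X))"
proof -
  have Rc: "R \<in> carrier_mat n n" using R by (rule orth_proj_carrier)
  have Xc: "X \<in> carrier_mat n n" using X by (rule positive_op_carrier)
  let ?f = "\<lambda>k. Re (sesq X (R *\<^sub>v unit_vec n k) (R *\<^sub>v unit_vec n k))"
  have "mtrace (R * X) = mtrace (R * (R * X))"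
    using R Rc Xc unfolding orth_proj_def by (simp add: assoc_mult_mat[of R n n R n X n, symmetric])
  also have "\<dots> = mtrace (R * X * R)" by (rule mtrace_comm) (use Rc Xc in auto)
  also have "\<dots> = (\<Sum>k<n. sesq (R * X * R) (unit_vec n k) (unit_vec n k))"
    by (rule mtrace_sesq) (use Rc Xc in auto)
  also have "\<dots> = (\<Sum>k<n. sesq X (R *\<^sub>v unit_vec n k) (R *\<^sub>v unit_vec n k))"
    by (intro sum.cong refl orth_proj_sandwich[OF R Xc]) auto
  finally have "Re (mtrace (R * X)) = sum ?f {..<n}" by simp
  moreover have "?f k \<le> sum ?f {..<n}"
    by (rule member_le_sum) (use k Rc in \<open>auto intro: positive_sesq_nonneg[OF X]\<close>)
  ultimately show ?thesis by simp
qed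

section \<open>Kraus maps and their duals\<close>

lemma kraus_dual_carrier:
  "\<forall>M\<in>set Ms. M \<in> carrier_mat d d \<Longrightarrow> A \<in> carrier_mat d d \<Longrightarrow> kraus_dual d Ms A \<in> carrier_mat d d"
  unfolding kraus_dual_def by (induct Ms) auto

lemma kraus_map_carrier:
  "\<forall>M\<in>set Ms. M \<in> carrier_mat d d \<Longrightarrow> A \<in> carrier_mat d d \<Longrightarrow> kraus_map d Ms A \<in> carrier_mat d d"
  unfolding kraus_map_def by (induct Ms) auto

lemma sesq_kraus_dual:
  assumes Ms: "\<forall>M\<in>set Ms. M \<in> carrier_mat d d" and A: "A \<in> carrier_mat d d"
    and x: "x \<in> carrier_vec d" and y: "y \<in> carrier_vec d"
  shows "sesq (kraus_dual d Ms A) x y = (\<Sum>M\<leftarrow>Ms. sesq A (M *\<^sub>v x) (M *\<^sub>v y))"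
  using Ms
proof (induct Ms)
  case (Cons M Ms)
  have M: "M \<in> carrier_mat d d" using Cons by auto
  have c: "mat_adjoint M * A * M \<in> carrier_mat d d" using M A by auto
  have r: "kraus_dual d Ms A \<in> carrier_mat d d" using Cons A by (intro kraus_dual_carrier) auto
  have "kraus_dual d (M # Ms) A = mat_adjoint M * A * M + kraus_dual d Ms A"
    unfolding kraus_dual_def by simp
  thus ?case using Cons sesq_add_mat[OF c r x y] sesq_conj_mat[OF M A x y] by simp
qed (use x y in \<open>simp add: kraus_dual_def sesq_zero_mat\<close>)

lemma sesq_kraus_map:
  assumes Ms: "\<forall>M\<in>set Ms. M \<in> carrier_mat d d" and A: "A \<in> carrier_mat d d"
    and x: "x \<in> carrier_vec d" and y: "y \<in> carrier_vec d"
  shows "sesq (kraus_map d Ms A) x y = (\<Sum>M\<leftarrow>Ms. sesq A (mat_adjoint M *\<^sub>v x) (mat_adjoint M *\<^sub>v y))"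
  using Ms
proof (induct Ms)
  case (Cons M Ms)
  have M: "mat_adjoint M \<in> carrier_mat d d" using Cons by auto
  have c: "M * A * mat_adjoint M \<in> carrier_mat d d" using Cons M A by auto
  have r: "kraus_map d Ms A \<in> carrier_mat d d" using Cons A by (intro kraus_map_carrier) auto
  have "kraus_map d (M # Ms) A = mat_adjoint (mat_adjoint M) * A * mat_adjoint M + kraus_map d Ms A"
    unfolding kraus_map_def by simp
  thus ?case using Cons sesq_add_mat[OF c r x y] sesq_conj_mat[OF M A x y] by simp
qed (use x y in \<open>simp add: kraus_map_def sesq_zero_mat\<close>)

lemma sum_list_positive:
  "(\<forall>x\<in>set xs. f x \<in> \<real> \<and> Re (f x) \<ge> 0) \<Longrightarrow> (\<Sum>x\<leftarrow>xs. f x) \<in> \<real> \<and> Re (\<Sum>x\<leftarrow>xs. f x) \<ge> 0"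
  by (induct xs) auto

lemma sum_list_Re: "Re (\<Sum>x\<leftarrow>xs. f x) = (\<Sum>x\<leftarrow>xs. Re (f x))"
  by (induct xs) auto

lemma kraus_dual_positive:
  assumes Ms: "\<forall>M\<in>set Ms. M \<in> carrier_mat d d" and A: "positive_op d A"
  shows "positive_op d (kraus_dual d Ms A)"
proof (rule positive_opI)
  have Ac: "A \<in> carrier_mat d d" using A by (rule positive_op_carrier)
  show "kraus_dual d Ms A \<in> carrier_mat d d" using Ms Ac by (rule kraus_dual_carrier)
  fix v :: "complex vec" assume v: "v \<in> carrier_vec d"
  show "sesq (kraus_dual d Ms A) v v \<in> \<real> \<and> 0 \<le> Re (sesq (kraus_dual d Ms A) v v)"
    unfolding sesq_kraus_dual[OF Ms Ac v v]
    by (rule sum_list_positive) (use Ms v A in \<open>auto intro!: positive_sesq\<close>)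
qed

lemma kraus_map_positive:
  assumes Ms: "\<forall>M\<in>set Ms. M \<in> carrier_mat d d" and A: "positive_op d A"
  shows "positive_op d (kraus_map d Ms A)"
proof (rule positive_opI)
  have Ac: "A \<in> carrier_mat d d" using A by (rule positive_op_carrier)
  show "kraus_map d Ms A \<in> carrier_mat d d" using Ms Ac by (rule kraus_map_carrier)
  fix v :: "complex vec" assume v: "v \<in> carrier_vec d"
  show "sesq (kraus_map d Ms A) v v \<in> \<real> \<and> 0 \<le> Re (sesq (kraus_map d Ms A) v v)"
    unfolding sesq_kraus_map[OF Ms Ac v v]
    by (rule sum_list_positive)
       (use Ms v A in \<open>auto intro!: positive_sesq mult_mat_vec_carrier adjoint_carrier\<close>)
qed

lemma kraus_dual_pow_carrier:
  "\<forall>M\<in>set Ms. M \<in> carrier_mat d d \<Longrightarrow> A \<in> carrier_mat d d \<Longrightarrow> (kraus_dual d Ms ^^ n) A \<in> carrier_mat d d"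
  by (induct n) (auto intro: kraus_dual_carrier)

lemma kraus_map_pow_carrier:
  "\<forall>M\<in>set Ms. M \<in> carrier_mat d d \<Longrightarrow> A \<in> carrier_mat d d \<Longrightarrow> (kraus_map d Ms ^^ n) A \<in> carrier_mat d d"
  by (induct n) (auto intro: kraus_map_carrier)

lemma kraus_dual_pow_positive:
  "\<forall>M\<in>set Ms. M \<in> carrier_mat d d \<Longrightarrow> positive_op d A \<Longrightarrow> positive_op d ((kraus_dual d Ms ^^ n) A)"
  by (induct n) (auto intro: kraus_dual_positive)

lemma kraus_map_pow_positive:
  "\<forall>M\<in>set Ms. M \<in> carrier_mat d d \<Longrightarrow> positive_op d A \<Longrightarrow> positive_op d ((kraus_map d Ms ^^ n) A)"
  by (induct n) (auto intro: kraus_map_positive)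

text \<open>Trace preservation of \<open>T\<close> is unitality of \<open>T*\<close>.\<close>
lemma kraus_dual_one:
  assumes K: "kraus_ops d Ms"
  shows "kraus_dual d Ms (1\<^sub>m d) = 1\<^sub>m d"
proof -
  have Ms: "\<forall>M\<in>set Ms. M \<in> carrier_mat d d" using K unfolding kraus_ops_def by auto
  have "kraus_dual d Ms (1\<^sub>m d) = foldr (\<lambda>M acc. mat_adjoint M * M + acc) Ms (0\<^sub>m d d)"
    unfolding kraus_dual_def by (rule foldr_cong) (use Ms in auto)
  thus ?thesis using K unfolding kraus_ops_def by simp
qed

lemma kraus_dual_pow_one: "kraus_ops d Ms \<Longrightarrow> (kraus_dual d Ms ^^ n) (1\<^sub>m d) = 1\<^sub>m d"
  by (induct n) (auto simp: kraus_dual_one)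

lemma kraus_sqnorm:
  assumes K: "kraus_ops d Ms" and v: "v \<in> carrier_vec d"
  shows "(\<Sum>M\<leftarrow>Ms. sqnorm (M *\<^sub>v v)) = sqnorm v"
proof -
  have Ms: "\<forall>M\<in>set Ms. M \<in> carrier_mat d d" using K unfolding kraus_ops_def by auto
  have "v \<bullet>c v = sesq (kraus_dual d Ms (1\<^sub>m d)) v v"
    using v by (simp add: kraus_dual_one[OF K] sesq_one)
  also have "\<dots> = (\<Sum>M\<leftarrow>Ms. (M *\<^sub>v v) \<bullet>c (M *\<^sub>v v))"
    unfolding sesq_kraus_dual[OF Ms one_carrier_mat v v]
    by (intro arg_cong[where f = sum_list] map_cong) (use Ms v in \<open>auto simp: sesq_one\<close>)
  finally show ?thesis unfolding sqnorm_def by (simp add: sum_list_Re)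
qed

lemma mtrace_kraus_dual:
  assumes Ms: "\<forall>M\<in>set Ms. M \<in> carrier_mat d d" and A: "A \<in> carrier_mat d d"
    and R: "R \<in> carrier_mat d d"
  shows "mtrace (A * kraus_map d Ms R) = mtrace (kraus_dual d Ms A * R)"
  using Ms
proof (induct Ms)
  case Nil
  then show ?case using A R by (simp add: kraus_map_def kraus_dual_def mtrace_def)
next
  case (Cons M Ms)
  have M: "M \<in> carrier_mat d d" and Ma: "mat_adjoint M \<in> carrier_mat d d" using Cons by auto
  have r1: "kraus_map d Ms R \<in> carrier_mat d d" using Cons R by (intro kraus_map_carrier) auto
  have r2: "kraus_dual d Ms A \<in> carrier_mat d d" using Cons A by (intro kraus_dual_carrier) auto
  have IH: "mtrace (A * kraus_map d Ms R) = mtrace (kraus_dual d Ms A * R)" using Cons by auto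
  have c1: "M * R * mat_adjoint M \<in> carrier_mat d d" "mat_adjoint M * A * M \<in> carrier_mat d d"
    using M Ma A R by auto
  have "mtrace (A * (M * R * mat_adjoint M)) = mtrace ((A * (M * R)) * mat_adjoint M)"
    using M Ma A R by (simp add: assoc_mult_mat[of _ d d _ d _ d])
  also have "\<dots> = mtrace (mat_adjoint M * (A * (M * R)))"
    by (rule mtrace_comm[of _ d d]) (use M Ma A R in auto)
  also have "\<dots> = mtrace (mat_adjoint M * A * M * R)"
    using M Ma A R by (simp add: assoc_mult_mat[of _ d d _ d _ d])
  finally have e: "mtrace (A * (M * R * mat_adjoint M)) = mtrace (mat_adjoint M * A * M * R)" .
  have "mtrace (A * kraus_map d (M # Ms) R) = mtrace (A * (M * R * mat_adjoint M) + A * kraus_map d Ms R)"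
    unfolding kraus_map_def using A c1 r1
    by (simp add: kraus_map_def[symmetric] mult_add_distrib_mat[of _ d d])
  also have "\<dots> = mtrace (mat_adjoint M * A * M * R) + mtrace (kraus_dual d Ms A * R)"
    using A c1 r1 e IH by (simp add: mtrace_add[of _ d])
  also have "\<dots> = mtrace ((mat_adjoint M * A * M + kraus_dual d Ms A) * R)"
    using R c1 r2 by (simp add: mtrace_add[of _ d] add_mult_distrib_mat[of _ d d])
  also have "\<dots> = mtrace (kraus_dual d (M # Ms) A * R)"
    unfolding kraus_dual_def by simp
  finally show ?case .
qed

lemma mtrace_kraus_dual_pow:
  assumes Ms: "\<forall>M\<in>set Ms. M \<in> carrier_mat d d" and A: "A \<in> carrier_mat d d"
    and R: "R \<in> carrier_mat d d"
  shows "mtrace (A * (kraus_map d Ms ^^ n) R) = mtrace ((kraus_dual d Ms ^^ n) A * R)"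
  using A
proof (induct n arbitrary: A)
  case (Suc n)
  have "mtrace (A * (kraus_map d Ms ^^ Suc n) R) = mtrace (kraus_dual d Ms A * (kraus_map d Ms ^^ n) R)"
    using mtrace_kraus_dual[OF Ms Suc(2) kraus_map_pow_carrier[OF Ms R]] by simp
  also have "\<dots> = mtrace ((kraus_dual d Ms ^^ n) (kraus_dual d Ms A) * R)"
    by (rule Suc(1)) (rule kraus_dual_carrier[OF Ms Suc(2)])
  finally show ?case by (simp add: funpow_swap1)
qed simp

lemma kernel_kraus_dual:
  assumes Ms: "\<forall>M\<in>set Ms. M \<in> carrier_mat d d" and A: "positive_op d A" and w: "w \<in> carrier_vec d"
  shows "kraus_dual d Ms A *\<^sub>v w = 0\<^sub>v d \<longleftrightarrow> (\<forall>M\<in>set Ms. A *\<^sub>v (M *\<^sub>v w) = 0\<^sub>v d)"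
proof -
  have Ac: "A \<in> carrier_mat d d" using A by (rule positive_op_carrier)
  have Mw: "M *\<^sub>v w \<in> carrier_vec d" if "M \<in> set Ms" for M using Ms that w by auto
  have "kraus_dual d Ms A *\<^sub>v w = 0\<^sub>v d \<longleftrightarrow> Re (sesq (kraus_dual d Ms A) w w) = 0"
    by (rule positive_kernel_iff[OF kraus_dual_positive[OF Ms A] w])
  also have "Re (sesq (kraus_dual d Ms A) w w) = sum_list (map (\<lambda>M. Re (sesq A (M *\<^sub>v w) (M *\<^sub>v w))) Ms)"
    unfolding sesq_kraus_dual[OF Ms Ac w w] sum_list_Re ..
  also have "\<dots> = 0 \<longleftrightarrow> (\<forall>M\<in>set Ms. Re (sesq A (M *\<^sub>v w) (M *\<^sub>v w)) = 0)"
    using Mw positive_sesq_nonneg[OF A] by (subst sum_list_nonneg_eq_0_iff) auto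
  also have "\<dots> \<longleftrightarrow> (\<forall>M\<in>set Ms. A *\<^sub>v (M *\<^sub>v w) = 0\<^sub>v d)"
    using Mw positive_kernel_iff[OF A] by auto
  finally show ?thesis .
qed

text \<open>The support of \<open>T(|v\<rangle>\<langle>v|)\<close> contains every \<open>M v\<close>: a vector orthogonal to the support
  annihilates the form of \<open>T(|v\<rangle>\<langle>v|)\<close>, whose summands are \<open>|\<langle>M\<^sup>\<dagger> w, v\<rangle>|\<^sup>2\<close>.\<close>
lemma kraus_op_in_supp:
  assumes Ms: "\<forall>M\<in>set Ms. M \<in> carrier_mat d d" and M: "M \<in> set Ms" and v: "v \<in> carrier_vec d"
  shows "M *\<^sub>v v \<in> supp d (kraus_map d Ms (rank1 d v))"
  unfolding supp_def
proof (intro CollectI conjI ballI)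
  have Mc: "M \<in> carrier_mat d d" using Ms M by auto
  have adj: "mat_adjoint M' *\<^sub>v w \<in> carrier_vec d" if "M' \<in> set Ms" "w \<in> carrier_vec d" for M' w
    using Ms that by (auto intro: mult_mat_vec_carrier[OF adjoint_carrier])
  show "M *\<^sub>v v \<in> carrier_vec d" using Mc v by simp
  fix w assume "w \<in> mat_kernel (kraus_map d Ms (rank1 d v))"
  hence w: "w \<in> carrier_vec d" and "kraus_map d Ms (rank1 d v) *\<^sub>v w = 0\<^sub>v d"
    using mat_kernelD[OF kraus_map_carrier[OF Ms rank1_carrier]] by auto
  hence "sum_list (map (\<lambda>M'. Re (sesq (rank1 d v) (mat_adjoint M' *\<^sub>v w) (mat_adjoint M' *\<^sub>v w))) Ms) = 0"
    unfolding sum_list_Re[symmetric] sesq_kraus_map[OF Ms rank1_carrier w w, symmetric]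
    by (simp add: sesq_def)
  hence "Re (sesq (rank1 d v) (mat_adjoint M *\<^sub>v w) (mat_adjoint M *\<^sub>v w)) = 0"
    using M adj w v by (subst (asm) sum_list_nonneg_eq_0_iff) (auto simp: rank1_sesq)
  hence "(mat_adjoint M *\<^sub>v w) \<bullet>c v = 0" using adj[OF M w] v by (simp add: rank1_sesq)
  hence "w \<bullet>c (M *\<^sub>v v) = 0" using adjoint_cscalar_prod[of "mat_adjoint M" d d w v] Mc w v by simp
  thus "(M *\<^sub>v v) \<bullet>c w = 0" using cscalar_prod_swap[of "M *\<^sub>v v" d w] Mc v w by simp
qed

section \<open>Strictly increasing chains of sets\<close>

lemma strict_chain_until_iff:
  fixes U :: "nat \<Rightarrow> 'a set"
  assumes mono: "\<And>n. U n \<subseteq> U (Suc n)"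
    and stable: "\<And>n. U n = U (Suc n) \<Longrightarrow> U (Suc n) = U (Suc (Suc n))"
  shows "(\<exists>N. (\<forall>n<N. U n \<subset> U (Suc n)) \<and> U N = F) \<longleftrightarrow> (\<exists>N. U N = F)"
proof
  assume "\<exists>N. U N = F"
  define N where "N = (LEAST N. U N = F)"
  have UN: "U N = F" unfolding N_def using \<open>\<exists>N. U N = F\<close> by (rule LeastI_ex)
  have "U n \<subset> U (Suc n)" if n: "n < N" for n
  proof (rule ccontr)
    assume "\<not> U n \<subset> U (Suc n)"
    hence rep: "U n = U (Suc n)" using mono[of n] by auto
    have step: "U (n + k) = U (Suc (n + k))" for k
      by (induct k) (use rep stable in auto)
    have "U (n + k) = U n" for k
      by (induct k) (use step in auto)
    from this[of "N - n"] have "U n = F" using n UN by simp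
    thus False using n not_less_Least[of n "\<lambda>N. U N = F"] unfolding N_def by blast
  qed
  thus "\<exists>N. (\<forall>n<N. U n \<subset> U (Suc n)) \<and> U N = F" using UN by blast
qed blast

section \<open>A projection and its complement\<close>

locale orth_projection =
  fixes d :: nat and P :: "complex mat"
  assumes orth: "orth_proj d P"
begin

definition Q :: "complex mat" where "Q = 1\<^sub>m d - P"

lemma orth_Q: "orth_proj d Q"
  unfolding Q_def by (rule orth_proj_complement[OF orth])

lemma P_carrier [simp]: "P \<in> carrier_mat d d"
  using orth by (rule orth_proj_carrier)

lemma Q_carrier [simp]: "Q \<in> carrier_mat d d"
  using orth_Q by (rule orth_proj_carrier)

lemma P_dims [simp]: "dim_row P = d" "dim_col P = d"
  by (rule carrier_matD[OF P_carrier])+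

lemma P_mult_carrier [simp]: "X \<in> carrier_mat d d \<Longrightarrow> P * X \<in> carrier_mat d d"
  by (rule mult_carrier_mat[OF P_carrier])

lemma P_vec_carrier [simp]: "x \<in> carrier_vec d \<Longrightarrow> P *\<^sub>v x \<in> carrier_vec d"
  by (rule mult_mat_vec_carrier[OF P_carrier])

lemma Q_vec_carrier [simp]: "x \<in> carrier_vec d \<Longrightarrow> Q *\<^sub>v x \<in> carrier_vec d"
  by (rule mult_mat_vec_carrier[OF Q_carrier])

lemma Q_vec: "x \<in> carrier_vec d \<Longrightarrow> Q *\<^sub>v x = x - P *\<^sub>v x"
  unfolding Q_def by (simp add: minus_mult_distrib_mat_vec[of _ d d])

lemma P_Q_decomp: "x \<in> carrier_vec d \<Longrightarrow> P *\<^sub>v x + Q *\<^sub>v x = x"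
  by (simp add: Q_vec) (rule eq_vecI, auto)

lemma P_Q_vec [simp]: "x \<in> carrier_vec d \<Longrightarrow> P *\<^sub>v (Q *\<^sub>v x) = 0\<^sub>v d"
  using orth assoc_mult_mat_vec[of P d d P d x]
  by (simp add: Q_vec mult_minus_distrib_mat_vec[of _ d d] orth_proj_def)

lemma Q_vec_range: "x \<in> carrier_vec d \<Longrightarrow> P *\<^sub>v x = x \<Longrightarrow> Q *\<^sub>v x = 0\<^sub>v d"
  by (simp add: Q_vec)

lemma P_positive: "positive_op d P"
  by (rule orth_proj_positive[OF orth])

lemma Q_positive: "positive_op d Q"
  by (rule orth_proj_positive[OF orth_Q])

lemma sesq_Q: "x \<in> carrier_vec d \<Longrightarrow> Re (sesq Q x x) = sqnorm (Q *\<^sub>v x)"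
  using orth_proj_sesq[OF orth_Q] by simp

lemma sesq_P_plus_Q: "x \<in> carrier_vec d \<Longrightarrow> Re (sesq P x x) + Re (sesq Q x x) = sqnorm x"
  using sesq_minus_mat[OF one_carrier_mat P_carrier, of x x] sesq_one[of x d x]
  unfolding Q_def sqnorm_def by simp

lemma sesq_Q_le: "x \<in> carrier_vec d \<Longrightarrow> Re (sesq Q x x) \<le> sqnorm x"
  using sesq_P_plus_Q[of x] positive_sesq_nonneg[OF P_positive, of x] by simp

lemma supp_rank1_range:
  assumes v: "v \<in> carrier_vec d" and Pv: "P *\<^sub>v v = v"
  shows "supp d (rank1 d v) \<subseteq> proj_range d P"
proof
  fix u assume "u \<in> supp d (rank1 d v)"
  hence u: "u \<in> carrier_vec d" and orth_u: "\<And>w. w \<in> mat_kernel (rank1 d v) \<Longrightarrow> u \<bullet>c w = 0"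
    unfolding supp_def by auto
  have "(Q *\<^sub>v u) \<bullet>c v = (Q *\<^sub>v u) \<bullet>c (P *\<^sub>v v)" using Pv by simp
  also have "\<dots> = (P *\<^sub>v (Q *\<^sub>v u)) \<bullet>c v"
    using adjoint_cscalar_prod[of P d d "Q *\<^sub>v u" v] orth u v unfolding orth_proj_def by simp
  finally have "(Q *\<^sub>v u) \<bullet>c v = 0" using u v by simp
  hence "Re (sesq (rank1 d v) (Q *\<^sub>v u) (Q *\<^sub>v u)) = 0" using rank1_sesq[OF v] u by simp
  hence "Q *\<^sub>v u \<in> mat_kernel (rank1 d v)"
    using positive_kernel_iff[OF rank1_positive[OF v], of "Q *\<^sub>v u"] u
    by (intro mat_kernelI[of _ d d]) auto
  hence "u \<bullet>c (Q *\<^sub>v u) = 0" by (rule orth_u)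
  hence "sqnorm (Q *\<^sub>v u) = 0"
    using sesq_Q[OF u] cscalar_prod_swap[of "Q *\<^sub>v u" d u] u unfolding sesq_def by simp
  hence "P *\<^sub>v u = u" using P_Q_decomp[OF u] sqnorm_eq_0[of "Q *\<^sub>v u" d] u by simp
  thus "u \<in> proj_range d P" using u unfolding proj_range_def by simp
qed

lemma sesq_off_block:
  assumes X: "X \<in> carrier_mat d d" and x: "x \<in> carrier_vec d" and y: "y \<in> carrier_vec d"
  shows "sesq (X - P * X * P) x y = sesq X (Q *\<^sub>v x) y + sesq X (P *\<^sub>v x) (Q *\<^sub>v y)"
proof -
  have "sesq (X - P * X * P) x y = sesq X x y - sesq X (P *\<^sub>v x) (P *\<^sub>v y)"
    using sesq_minus_mat[of X d "P * X * P" x y] orth_proj_sandwich[OF orth X x y] X x y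
    by (simp add: mult_carrier_mat[of _ d d P])
  also have "sesq X x y = sesq X (P *\<^sub>v x) y + sesq X (Q *\<^sub>v x) y"
    using sesq_add_left[OF X _ _ y, of "P *\<^sub>v x" "Q *\<^sub>v x"] P_Q_decomp[OF x] x by simp
  also have "sesq X (P *\<^sub>v x) y = sesq X (P *\<^sub>v x) (P *\<^sub>v y) + sesq X (P *\<^sub>v x) (Q *\<^sub>v y)"
    using sesq_add_right[OF X _ _ _, of "P *\<^sub>v y" "Q *\<^sub>v y" "P *\<^sub>v x"] P_Q_decomp[OF y] x y by simp
  finally show ?thesis by simp
qed

lemma off_block_entry_bound:
  assumes X: "positive_op d X" and i: "i < d" and j: "j < d"
  shows "cmod ((X - P * X * P) $$ (i,j)) \<le> 2 * sqrt (Re (mtrace (Q * X)) * Re (mtrace X))"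
proof -
  have Xc: "X \<in> carrier_mat d d" using X by (rule positive_op_carrier)
  let ?ei = "unit_vec d i" and ?ej = "unit_vec d j"
  let ?tq = "Re (mtrace (Q * X))" and ?tx = "Re (mtrace X)"
  have ei: "?ei \<in> carrier_vec d" and ej: "?ej \<in> carrier_vec d" by auto
  have le_tq: "Re (sesq X (Q *\<^sub>v unit_vec d k) (Q *\<^sub>v unit_vec d k)) \<le> ?tq" if "k < d" for k
    by (rule orth_proj_sesq_le_trace[OF orth_Q X that])
  have le_tp: "Re (sesq X (P *\<^sub>v unit_vec d k) (P *\<^sub>v unit_vec d k)) \<le> Re (mtrace (P * X))" if "k < d" for k
    by (rule orth_proj_sesq_le_trace[OF orth X that])
  have le_tx: "Re (sesq X (unit_vec d k) (unit_vec d k)) \<le> ?tx" if "k < d" for k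
    using orth_proj_sesq_le_trace[OF orth_proj_one X that] Xc that by simp
  have tq0: "?tq \<ge> 0"
    using le_tq[OF i] positive_sesq_nonneg[OF X, of "Q *\<^sub>v ?ei"] ei by simp
  have "mtrace X = mtrace (P * X) + mtrace (Q * X)"
    using Xc mtrace_minus[of X d "P * X"] by (simp add: Q_def minus_mult_distrib_mat[of _ d d])
  hence tp: "Re (mtrace (P * X)) \<le> ?tx" using tq0 by simp
  have tx0: "?tx \<ge> 0" using le_tx[OF i] positive_sesq_nonneg[OF X ei] by simp
  have "(cmod (sesq X (Q *\<^sub>v ?ej) ?ei))\<^sup>2 \<le> Re (sesq X (Q *\<^sub>v ?ej) (Q *\<^sub>v ?ej)) * Re (sesq X ?ei ?ei)"
    using positive_cauchy_schwarz[OF X] ei ej by simp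
  also have "\<dots> \<le> ?tq * ?tx"
    using le_tq[OF j] le_tx[OF i] tq0 positive_sesq_nonneg[OF X] ei ej by (intro mult_mono) auto
  finally have 1: "cmod (sesq X (Q *\<^sub>v ?ej) ?ei) \<le> sqrt (?tq * ?tx)" by (rule real_le_rsqrt)
  have "(cmod (sesq X (P *\<^sub>v ?ej) (Q *\<^sub>v ?ei)))\<^sup>2
      \<le> Re (sesq X (P *\<^sub>v ?ej) (P *\<^sub>v ?ej)) * Re (sesq X (Q *\<^sub>v ?ei) (Q *\<^sub>v ?ei))"
    using positive_cauchy_schwarz[OF X] ei ej by simp
  also have "\<dots> \<le> ?tx * ?tq"
    using le_tp[OF j] tp le_tq[OF i] tx0 positive_sesq_nonneg[OF X] ei ej by (intro mult_mono) auto
  finally have 2: "cmod (sesq X (P *\<^sub>v ?ej) (Q *\<^sub>v ?ei)) \<le> sqrt (?tq * ?tx)"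
    by (simp add: real_le_rsqrt mult.commute)
  have "X - P * X * P \<in> carrier_mat d d"
    using Xc by (intro minus_carrier_mat mult_carrier_mat[of _ d d P]) auto
  hence "(X - P * X * P) $$ (i,j) = sesq X (Q *\<^sub>v ?ej) ?ei + sesq X (P *\<^sub>v ?ej) (Q *\<^sub>v ?ei)"
    using sesq_unit_vec[of "X - P * X * P" d i j] sesq_off_block[OF Xc ej ei] i j by simp
  thus ?thesis
    using norm_triangle_ineq[of "sesq X (Q *\<^sub>v ?ej) ?ei" "sesq X (P *\<^sub>v ?ej) (Q *\<^sub>v ?ei)"] 1 2
    by simp
qed

lemma mtrace_off_block:
  assumes X: "X \<in> carrier_mat d d"
  shows "mtrace (X - P * X * P) = mtrace (Q * X)"
proof -
  have "mtrace (P * X * P) = mtrace (P * (P * X))"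
    by (rule mtrace_comm[of _ d d]) (use X in auto)
  also have "\<dots> = mtrace (P * X)"
    using X orth by (simp add: assoc_mult_mat[of P d d P d X d, symmetric] orth_proj_def)
  finally show ?thesis
    using X mtrace_minus[of X d "P * X"] mtrace_minus[of X d "P * X * P"]
    by (simp add: Q_def minus_mult_distrib_mat[of _ d d] mult_carrier_mat[of _ d d P])
qed

end

section \<open>The dual iterates of an invariant projection\<close>

locale invariant_projection = orth_projection +
  fixes Ms :: "complex mat list"
  assumes kraus: "kraus_ops d Ms"
    and invariant: "invariant_sub d Ms (proj_range d P)"
begin

abbreviation Td :: "complex mat \<Rightarrow> complex mat" where "Td \<equiv> kraus_dual d Ms"
abbreviation Tm :: "complex mat \<Rightarrow> complex mat" where "Tm \<equiv> kraus_map d Ms"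

lemma Ms_carrier: "\<forall>M\<in>set Ms. M \<in> carrier_mat d d"
  using kraus unfolding kraus_ops_def by auto

lemma Ms_vec_carrier [simp]: "M \<in> set Ms \<Longrightarrow> v \<in> carrier_vec d \<Longrightarrow> M *\<^sub>v v \<in> carrier_vec d"
  using Ms_carrier by (auto intro: mult_mat_vec_carrier)

text \<open>Invariance of \<open>H_S\<close> under \<open>T\<close> says exactly that each Kraus operator maps \<open>H_S\<close> into
  itself: test the invariance on the pure state supported by \<open>v \<in> H_S\<close>.\<close>
lemma kraus_op_invariant:
  assumes M: "M \<in> set Ms" and v: "v \<in> carrier_vec d" and Pv: "P *\<^sub>v v = v"
  shows "P *\<^sub>v (M *\<^sub>v v) = M *\<^sub>v v"
proof -
  have "supp d (Tm (rank1 d v)) \<subseteq> proj_range d P"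
    using invariant supp_rank1_range[OF v Pv] rank1_positive[OF v] unfolding invariant_sub_def by blast
  thus ?thesis using kraus_op_in_supp[OF Ms_carrier M v] unfolding proj_range_def by auto
qed

definition Pn :: "nat \<Rightarrow> complex mat" where "Pn n = (Td ^^ n) P"
definition Bn :: "nat \<Rightarrow> complex mat" where "Bn n = (Td ^^ n) Q"

lemma Pn_carrier [simp]: "Pn n \<in> carrier_mat d d"
  unfolding Pn_def by (rule kraus_dual_pow_carrier[OF Ms_carrier P_carrier])

lemma Bn_carrier [simp]: "Bn n \<in> carrier_mat d d"
  unfolding Bn_def by (rule kraus_dual_pow_carrier[OF Ms_carrier Q_carrier])

lemma Pn_positive: "positive_op d (Pn n)"
  unfolding Pn_def by (rule kraus_dual_pow_positive[OF Ms_carrier P_positive])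

lemma Bn_positive: "positive_op d (Bn n)"
  unfolding Bn_def by (rule kraus_dual_pow_positive[OF Ms_carrier Q_positive])

lemma sesq_dual_pow_Suc:
  assumes A: "A \<in> carrier_mat d d" and v: "v \<in> carrier_vec d"
  shows "Re (sesq ((Td ^^ Suc n) A) v v) = (\<Sum>M\<leftarrow>Ms. Re (sesq ((Td ^^ n) A) (M *\<^sub>v v) (M *\<^sub>v v)))"
  using sesq_kraus_dual[OF Ms_carrier kraus_dual_pow_carrier[OF Ms_carrier A] v v]
  by (simp add: sum_list_Re)

lemma sesq_Pn_plus_Bn: "v \<in> carrier_vec d \<Longrightarrow> Re (sesq (Pn n) v v) + Re (sesq (Bn n) v v) = sqnorm v"
proof (induct n arbitrary: v)
  case 0
  then show ?case unfolding Pn_def Bn_def using sesq_P_plus_Q by simp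
next
  case (Suc n)
  have "Re (sesq (Pn (Suc n)) v v) + Re (sesq (Bn (Suc n)) v v)
      = (\<Sum>M\<leftarrow>Ms. Re (sesq (Pn n) (M *\<^sub>v v) (M *\<^sub>v v)) + Re (sesq (Bn n) (M *\<^sub>v v) (M *\<^sub>v v)))"
    unfolding Pn_def Bn_def sesq_dual_pow_Suc[OF P_carrier Suc(2)] sesq_dual_pow_Suc[OF Q_carrier Suc(2)]
      sum_list_addf ..
  also have "\<dots> = (\<Sum>M\<leftarrow>Ms. sqnorm (M *\<^sub>v v))"
    by (intro arg_cong[where f = sum_list] map_cong) (use Suc in auto)
  also have "\<dots> = sqnorm v" by (rule kraus_sqnorm[OF kraus Suc(2)])
  finally show ?case .
qed

text \<open>\<open>B\<^sub>n\<close> vanishes on \<open>H_S\<close>, because the Kraus operators never leave \<open>H_S\<close>.\<close>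
lemma sesq_Bn_range: "s \<in> carrier_vec d \<Longrightarrow> P *\<^sub>v s = s \<Longrightarrow> Re (sesq (Bn n) s s) = 0"
proof (induct n arbitrary: s)
  case 0
  then show ?case unfolding Bn_def using sesq_Q[of s] Q_vec_range[of s] sqnorm_eq_0[of "0\<^sub>v d" d] by simp
next
  case (Suc n)
  have "Re (sesq (Bn (Suc n)) s s) = (\<Sum>M\<leftarrow>Ms. Re (sesq (Bn n) (M *\<^sub>v s) (M *\<^sub>v s)))"
    unfolding Bn_def sesq_dual_pow_Suc[OF Q_carrier Suc(2)] ..
  also have "\<dots> = (\<Sum>M\<leftarrow>Ms. 0)"
    by (intro arg_cong[where f = sum_list] map_cong) (use Suc kraus_op_invariant in auto)
  finally show ?case by simp
qed

lemma sesq_Bn_Q: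
  assumes v: "v \<in> carrier_vec d"
  shows "sesq (Bn n) v v = sesq (Bn n) (Q *\<^sub>v v) (Q *\<^sub>v v)"
proof -
  have pv: "P *\<^sub>v v \<in> carrier_vec d" "Q *\<^sub>v v \<in> carrier_vec d" using v by auto
  have z: "Re (sesq (Bn n) (P *\<^sub>v v) (P *\<^sub>v v)) = 0"
    using v orth assoc_mult_mat_vec[of P d d P d v]
    by (intro sesq_Bn_range) (auto simp: orth_proj_def)
  have "sesq (Bn n) v v = sesq (Bn n) (P *\<^sub>v v + Q *\<^sub>v v) (P *\<^sub>v v + Q *\<^sub>v v)"
    using P_Q_decomp[OF v] by simp
  also have "\<dots> = sesq (Bn n) (Q *\<^sub>v v) (Q *\<^sub>v v)"
    using positive_sesq_Im[OF Bn_positive pv(1), of n] z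
    unfolding sesq_expand[OF Bn_carrier pv] positive_sesq_vanish[OF Bn_positive pv(2) pv(1) z]
    by (simp add: complex_eq_iff)
  finally show ?thesis .
qed

lemma sesq_dual_pow_mono:
  assumes A: "A \<in> carrier_mat d d" and A': "A' \<in> carrier_mat d d"
    and le: "\<And>v. v \<in> carrier_vec d \<Longrightarrow> Re (sesq A v v) \<le> c * Re (sesq A' v v)"
    and v: "v \<in> carrier_vec d"
  shows "Re (sesq ((Td ^^ n) A) v v) \<le> c * Re (sesq ((Td ^^ n) A') v v)"
  using v
proof (induct n arbitrary: v)
  case (Suc n)
  have "Re (sesq ((Td ^^ Suc n) A) v v) = (\<Sum>M\<leftarrow>Ms. Re (sesq ((Td ^^ n) A) (M *\<^sub>v v) (M *\<^sub>v v)))"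
    by (rule sesq_dual_pow_Suc[OF A Suc(2)])
  also have "\<dots> \<le> (\<Sum>M\<leftarrow>Ms. c * Re (sesq ((Td ^^ n) A') (M *\<^sub>v v) (M *\<^sub>v v)))"
    by (rule sum_list_mono) (use Suc in auto)
  also have "\<dots> = c * Re (sesq ((Td ^^ Suc n) A') v v)"
    unfolding sesq_dual_pow_Suc[OF A' Suc(2)] sum_list_const_mult ..
  finally show ?case .
qed (use le in simp)

lemma sesq_dual_Q_le:
  assumes v: "v \<in> carrier_vec d"
  shows "Re (sesq (Td Q) v v) \<le> Re (sesq Q v v)"
proof -
  have qv: "Q *\<^sub>v v \<in> carrier_vec d" using v by simp
  have "Re (sesq (Td Q) v v) = Re (sesq (Bn 1) (Q *\<^sub>v v) (Q *\<^sub>v v))"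
    using sesq_Bn_Q[OF v, of 1] unfolding Bn_def by simp
  also have "\<dots> = (\<Sum>M\<leftarrow>Ms. Re (sesq Q (M *\<^sub>v (Q *\<^sub>v v)) (M *\<^sub>v (Q *\<^sub>v v))))"
    unfolding Bn_def using sesq_dual_pow_Suc[OF Q_carrier qv, of 0] by simp
  also have "\<dots> \<le> (\<Sum>M\<leftarrow>Ms. sqnorm (M *\<^sub>v (Q *\<^sub>v v)))"
    by (rule sum_list_mono) (use qv in \<open>auto intro: sesq_Q_le\<close>)
  also have "\<dots> = Re (sesq Q v v)" using kraus_sqnorm[OF kraus qv] sesq_Q[OF v] by simp
  finally show ?thesis .
qed

lemma sesq_Bn_Suc_le:
  assumes v: "v \<in> carrier_vec d"
  shows "Re (sesq (Bn (Suc n)) v v) \<le> Re (sesq (Bn n) v v)"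
proof -
  have "Re (sesq ((Td ^^ n) (Td Q)) v v) \<le> 1 * Re (sesq ((Td ^^ n) Q) v v)"
    by (rule sesq_dual_pow_mono[OF kraus_dual_carrier[OF Ms_carrier Q_carrier] Q_carrier _ v])
       (simp add: sesq_dual_Q_le)
  thus ?thesis unfolding Bn_def by (simp add: funpow_swap1)
qed

lemma sesq_Bn_antimono:
  assumes "m \<le> n" and v: "v \<in> carrier_vec d"
  shows "Re (sesq (Bn n) v v) \<le> Re (sesq (Bn m) v v)"
  using assms(1)
proof (induct n rule: dec_induct)
  case (step k)
  thus ?case using sesq_Bn_Suc_le[OF v, of k] by simp
qed simp

lemma kernel_Pn_Suc:
  "mat_kernel (Pn (Suc n)) = {w \<in> carrier_vec d. \<forall>M\<in>set Ms. M *\<^sub>v w \<in> mat_kernel (Pn n)}"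
proof -
  have Pn_Suc: "Pn (Suc n) = Td (Pn n)" unfolding Pn_def by simp
  have "Pn (Suc n) *\<^sub>v w = 0\<^sub>v d \<longleftrightarrow> (\<forall>M\<in>set Ms. Pn n *\<^sub>v (M *\<^sub>v w) = 0\<^sub>v d)"
    if "w \<in> carrier_vec d" for w
    unfolding Pn_Suc by (rule kernel_kraus_dual[OF Ms_carrier Pn_positive that])
  thus ?thesis unfolding mat_kernel_def by (auto simp: carrier_matD[OF Pn_carrier])
qed

text \<open>Since \<open>B\<^sub>n\<close> decreases and \<open>P\<^sub>n + B\<^sub>n = 1\<close>, the form of \<open>P\<^sub>n\<close> increases.\<close>
lemma kernel_Pn_antimono: "mat_kernel (Pn (Suc n)) \<subseteq> mat_kernel (Pn n)"
proof
  fix w assume "w \<in> mat_kernel (Pn (Suc n))"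
  hence w: "w \<in> carrier_vec d" and "Pn (Suc n) *\<^sub>v w = 0\<^sub>v d" using mat_kernelD[OF Pn_carrier] by auto
  hence "Re (sesq (Pn (Suc n)) w w) = 0" using positive_kernel_iff[OF Pn_positive w] by simp
  hence "Re (sesq (Pn n) w w) \<le> 0"
    using sesq_Pn_plus_Bn[OF w, of n] sesq_Pn_plus_Bn[OF w, of "Suc n"] sesq_Bn_Suc_le[OF w, of n] by simp
  hence "Re (sesq (Pn n) w w) = 0" using positive_sesq_nonneg[OF Pn_positive w, of n] by simp
  hence "Pn n *\<^sub>v w = 0\<^sub>v d" using positive_kernel_iff[OF Pn_positive w] by simp
  thus "w \<in> mat_kernel (Pn n)" by (rule mat_kernelI[OF Pn_carrier w])
qed

lemma supp_Pn_mono: "supp d (Pn n) \<subseteq> supp d (Pn (Suc n))"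
  by (rule supp_antimono[OF kernel_Pn_antimono])

text \<open>By the previous lemma the kernel of \<open>P\<^sub>n\<^sub>+\<^sub>1\<close> is a function of the kernel of \<open>P\<^sub>n\<close>, so one
  repetition in the sequence of supports makes it constant.\<close>
lemma supp_Pn_stable:
  assumes "supp d (Pn n) = supp d (Pn (Suc n))"
  shows "supp d (Pn (Suc n)) = supp d (Pn (Suc (Suc n)))"
proof -
  have "mat_kernel (Pn n) = mat_kernel (Pn (Suc n))"
    using assms positive_supp_eq_iff[OF Pn_positive Pn_positive] by blast
  hence "mat_kernel (Pn (Suc n)) = mat_kernel (Pn (Suc (Suc n)))"
    unfolding kernel_Pn_Suc[of n] kernel_Pn_Suc[of "Suc n"] by simp
  thus ?thesis using positive_supp_eq_iff[OF Pn_positive Pn_positive] by blast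
qed

lemma supp_chain_iff_nondegenerate:
  "(\<exists>N. (\<forall>n<N. supp d (Pn n) \<subset> supp d (Pn (Suc n))) \<and> supp d (Pn N) = carrier_vec d)
   \<longleftrightarrow> (\<exists>N. nondegenerate d (Pn N))"
proof -
  have "(\<exists>N. (\<forall>n<N. supp d (Pn n) \<subset> supp d (Pn (Suc n))) \<and> supp d (Pn N) = carrier_vec d)
    \<longleftrightarrow> (\<exists>N. supp d (Pn N) = carrier_vec d)"
    by (rule strict_chain_until_iff[of "\<lambda>n. supp d (Pn n)", OF supp_Pn_mono supp_Pn_stable])
  thus ?thesis using supp_full_iff[OF Pn_carrier] by simp
qed

lemma nondegenerate_Pn_Suc: "nondegenerate d (Pn N) \<Longrightarrow> nondegenerate d (Pn (Suc N))"
  using kernel_Pn_antimono[of N] unfolding nondegenerate_def mat_kernel_def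
  by (auto simp: carrier_matD[OF Pn_carrier])

lemma mtrace_Q_Tm_pow: "R \<in> carrier_mat d d \<Longrightarrow> mtrace (Q * (Tm ^^ n) R) = mtrace (Bn n * R)"
  unfolding Bn_def by (rule mtrace_kraus_dual_pow[OF Ms_carrier Q_carrier])

text \<open>Test GAS on the basis state \<open>e\<^sub>i\<close>: \<open>(B\<^sub>n)\<^sub>i\<^sub>i = tr (T\<^sup>n(\<rho>) - P T\<^sup>n(\<rho>) P)\<close>, which is at most
  \<open>d\<close> times the norm that GAS sends to zero.\<close>
lemma GAS_Bn_diag_tendsto_0:
  assumes G: "GAS d Ms P" and i: "i < d"
  shows "(\<lambda>n. Bn n $$ (i,i)) \<longlonglongrightarrow> 0"
proof -
  let ?\<rho> = "rank1 d (unit_vec d i)"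
  define Y where "Y n = (Tm ^^ n) ?\<rho> - P * (Tm ^^ n) ?\<rho> * P" for n
  have X: "(Tm ^^ n) ?\<rho> \<in> carrier_mat d d" for n
    by (rule kraus_map_pow_carrier[OF Ms_carrier rank1_carrier])
  have Y: "Y n \<in> carrier_mat d d" for n
    unfolding Y_def using X[of n] by (intro minus_carrier_mat mult_carrier_mat[of _ d d P]) auto
  have lim: "(\<lambda>n. mnorm (Y n)) \<longlonglongrightarrow> 0"
    using G rank1_unit_vec_density[OF i] unfolding GAS_def Y_def by blast
  have "Bn n $$ (i,i) = mtrace (Y n)" for n
    unfolding Y_def mtrace_off_block[OF X] mtrace_Q_Tm_pow[OF rank1_carrier]
    by (rule mtrace_mult_rank1_unit_vec[OF Bn_carrier i, symmetric])
  moreover have "norm (mtrace (Y n)) \<le> mnorm (Y n) * real d" for n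
    using trace_le_mnorm[OF Y] by (simp add: mult.commute)
  ultimately show ?thesis
    by (intro tendsto_0_le[OF lim, where K = "real d"] always_eventually) (auto simp: mnorm_nonneg)
qed

lemma GAS_Bn_tendsto_0:
  assumes G: "GAS d Ms P" and i: "i < d" and j: "j < d"
  shows "(\<lambda>n. Bn n $$ (i,j)) \<longlonglongrightarrow> 0"
  by (rule positive_entries_tendsto_0[OF Bn_positive _ i j])
     (use tendsto_Re[OF GAS_Bn_diag_tendsto_0[OF G]] in simp)

text \<open>Once the entries of \<open>B\<^sub>N\<close> are small, \<open>B\<^sub>N < 1\<close> in the form sense, so \<open>P\<^sub>N = 1 - B\<^sub>N\<close>
  has trivial kernel.\<close>
lemma Bn_tendsto_0_nondegenerate:
  assumes B0: "\<And>i j. i < d \<Longrightarrow> j < d \<Longrightarrow> (\<lambda>n. Bn n $$ (i,j)) \<longlonglongrightarrow> 0"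
  shows "\<exists>N. nondegenerate d (Pn N)"
proof -
  have "(\<lambda>n. \<Sum>i<d. \<Sum>j<d. cmod (Bn n $$ (i,j))) \<longlonglongrightarrow> (\<Sum>i<d. \<Sum>j<d. 0)"
    using B0 by (intro tendsto_sum) (auto simp: tendsto_norm_zero_iff)
  hence "\<forall>\<^sub>F n in sequentially. (\<Sum>i<d. \<Sum>j<d. cmod (Bn n $$ (i,j))) < 1"
    by (intro order_tendstoD) auto
  then obtain N where N: "(\<Sum>i<d. \<Sum>j<d. cmod (Bn N $$ (i,j))) < 1"
    by (auto simp: eventually_sequentially)
  have "nondegenerate d (Pn N)" unfolding nondegenerate_def
  proof (intro ballI impI)
    fix w :: "complex vec" assume w: "w \<in> carrier_vec d" and "Pn N *\<^sub>v w = 0\<^sub>v d"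
    hence "sqnorm w = Re (sesq (Bn N) w w)"
      using positive_kernel_iff[OF Pn_positive w] sesq_Pn_plus_Bn[OF w, of N] by simp
    also have "\<dots> \<le> (\<Sum>i<d. \<Sum>j<d. cmod (Bn N $$ (i,j))) * sqnorm w"
      using complex_Re_le_cmod sesq_le_entry_sum[OF Bn_carrier w] by (rule order_trans)
    finally have "\<not> sqnorm w > 0" using mult_strict_right_mono[OF N, of "sqnorm w"] by auto
    thus "w = 0\<^sub>v d" using sqnorm_eq_0[OF w] sqnorm_nonneg[of w] by simp
  qed
  thus ?thesis by blast
qed

text \<open>If \<open>P\<^sub>N \<ge> c > 0\<close> then \<open>B\<^sub>N \<le> (1 - c) Q\<close>, since \<open>B\<^sub>N\<close> only sees the component outside \<open>H_S\<close>.\<close>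
lemma nondegenerate_Bn_contraction:
  assumes nd: "nondegenerate d (Pn N)"
  obtains q where "0 \<le> q" "q < 1"
    and "\<And>w. w \<in> carrier_vec d \<Longrightarrow> Re (sesq (Bn N) w w) \<le> q * Re (sesq Q w w)"
proof -
  obtain c where c: "c > 0" and lb: "\<And>v. v \<in> carrier_vec d \<Longrightarrow> c * sqnorm v \<le> Re (sesq (Pn N) v v)"
    using nondegenerate_lower_bound[OF Pn_positive nd] by blast
  define q where "q = 1 - min c 1"
  have q: "0 \<le> q" "q < 1" using c unfolding q_def by auto
  have "Re (sesq (Bn N) w w) \<le> q * Re (sesq Q w w)" if w: "w \<in> carrier_vec d" for w
  proof -
    have qw: "Q *\<^sub>v w \<in> carrier_vec d" using w by simp
    have "min c 1 * sqnorm (Q *\<^sub>v w) \<le> c * sqnorm (Q *\<^sub>v w)"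
      using sqnorm_nonneg by (intro mult_right_mono) auto
    also have "\<dots> \<le> Re (sesq (Pn N) (Q *\<^sub>v w) (Q *\<^sub>v w))" by (rule lb[OF qw])
    finally have "Re (sesq (Bn N) (Q *\<^sub>v w) (Q *\<^sub>v w)) \<le> q * sqnorm (Q *\<^sub>v w)"
      using sesq_Pn_plus_Bn[OF qw, of N] unfolding q_def by (simp add: algebra_simps)
    thus ?thesis using sesq_Bn_Q[OF w, of N] sesq_Q[OF w] by simp
  qed
  thus ?thesis using q that by blast
qed

text \<open>Iterating the contraction with the monotonicity of \<open>T*\<close>: \<open>B\<^sub>k\<^sub>N \<le> q\<^sup>k Q\<close>.\<close>
lemma sesq_Bn_geometric:
  assumes q: "0 \<le> q"
    and contr: "\<And>w. w \<in> carrier_vec d \<Longrightarrow> Re (sesq (Bn N) w w) \<le> q * Re (sesq Q w w)"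
    and w: "w \<in> carrier_vec d"
  shows "Re (sesq (Bn (k * N)) w w) \<le> q ^ k * Re (sesq Q w w)"
  using w
proof (induct k arbitrary: w)
  case (Suc k)
  have "Bn (Suc k * N) = (Td ^^ (k * N)) (Bn N)"
    unfolding Bn_def by (simp add: funpow_add add.commute[of N])
  hence "Re (sesq (Bn (Suc k * N)) w w) \<le> q * Re (sesq (Bn (k * N)) w w)"
    using sesq_dual_pow_mono[OF Bn_carrier Q_carrier contr Suc(2)] unfolding Bn_def by simp
  also have "\<dots> \<le> q * (q ^ k * Re (sesq Q w w))"
    using Suc q by (intro mult_left_mono) auto
  finally show ?case by (simp add: mult.assoc)
qed (simp add: Bn_def)

text \<open>Since \<open>B\<^sub>n\<close> decreases, geometric decay along the multiples of \<open>N + 1\<close> (a positive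
  period, with \<open>P\<^sub>N\<^sub>+\<^sub>1\<close> still nondegenerate) controls the whole sequence.\<close>
lemma nondegenerate_sesq_Bn_tendsto_0:
  assumes nd: "nondegenerate d (Pn N)" and v: "v \<in> carrier_vec d"
  shows "(\<lambda>n. Re (sesq (Bn n) v v)) \<longlonglongrightarrow> 0"
proof -
  obtain q where q: "0 \<le> q" "q < 1"
    and contr: "\<And>w. w \<in> carrier_vec d \<Longrightarrow> Re (sesq (Bn (Suc N)) w w) \<le> q * Re (sesq Q w w)"
    using nondegenerate_Bn_contraction[OF nondegenerate_Pn_Suc[OF nd]] by blast
  have bound: "Re (sesq (Bn n) v v) \<le> q ^ (n div Suc N) * sqnorm v" for n
  proof -
    have "Re (sesq (Bn n) v v) \<le> Re (sesq (Bn (n div Suc N * Suc N)) v v)"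
      by (rule sesq_Bn_antimono[OF div_times_less_eq_dividend v])
    also have "\<dots> \<le> q ^ (n div Suc N) * Re (sesq Q v v)"
      by (rule sesq_Bn_geometric[OF q(1) contr v])
    also have "\<dots> \<le> q ^ (n div Suc N) * sqnorm v"
      using sesq_Q_le[OF v] q by (intro mult_left_mono) auto
    finally show ?thesis .
  qed
  have "(\<lambda>n. q ^ n) \<longlonglongrightarrow> 0" using q by (intro LIMSEQ_power_zero) auto
  hence "(\<lambda>n. q ^ (n div Suc N)) \<longlonglongrightarrow> 0"
    by (rule filterlim_compose[OF _ filterlim_at_top_div_const_nat]) simp
  hence "(\<lambda>n. q ^ (n div Suc N) * sqnorm v) \<longlonglongrightarrow> 0 * sqnorm v"
    by (intro tendsto_mult tendsto_const)
  hence lim: "(\<lambda>n. q ^ (n div Suc N) * sqnorm v) \<longlonglongrightarrow> 0" by simp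
  show ?thesis
  proof (rule tendsto_sandwich[OF _ _ tendsto_const lim])
    show "\<forall>\<^sub>F n in sequentially. 0 \<le> Re (sesq (Bn n) v v)"
      using positive_sesq_nonneg[OF Bn_positive v] by simp
    show "\<forall>\<^sub>F n in sequentially. Re (sesq (Bn n) v v) \<le> q ^ (n div Suc N) * sqnorm v"
      using bound by simp
  qed
qed

lemma nondegenerate_Bn_tendsto_0:
  assumes nd: "nondegenerate d (Pn N)" and i: "i < d" and j: "j < d"
  shows "(\<lambda>n. Bn n $$ (i,j)) \<longlonglongrightarrow> 0"
proof (rule positive_entries_tendsto_0[OF Bn_positive _ i j])
  fix k assume k: "k < d"
  show "(\<lambda>n. Re (Bn n $$ (k,k))) \<longlonglongrightarrow> 0"
    using nondegenerate_sesq_Bn_tendsto_0[OF nd, of "unit_vec d k"] sesq_unit_vec[OF Bn_carrier k k]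
    by simp
qed

lemma Bn_tendsto_0_weight:
  assumes B0: "\<And>i j. i < d \<Longrightarrow> j < d \<Longrightarrow> (\<lambda>n. Bn n $$ (i,j)) \<longlonglongrightarrow> 0"
    and \<rho>: "\<rho> \<in> carrier_mat d d"
  shows "(\<lambda>n. Re (mtrace (Q * (Tm ^^ n) \<rho>))) \<longlonglongrightarrow> 0"
proof -
  have e: "mtrace (Q * (Tm ^^ n) \<rho>) = (\<Sum>a<d. \<Sum>b<d. Bn n $$ (a,b) * \<rho> $$ (b,a))" for n
    unfolding mtrace_Q_Tm_pow[OF \<rho>] by (rule mtrace_mult[OF Bn_carrier \<rho>])
  have "(\<lambda>n. \<Sum>a<d. \<Sum>b<d. Bn n $$ (a,b) * \<rho> $$ (b,a)) \<longlonglongrightarrow> (\<Sum>a<d. \<Sum>b<d. 0 * \<rho> $$ (b,a))"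
    by (intro tendsto_sum tendsto_mult tendsto_const B0) auto
  hence "(\<lambda>n. mtrace (Q * (Tm ^^ n) \<rho>)) \<longlonglongrightarrow> 0" unfolding e by simp
  from tendsto_Re[OF this] show ?thesis by simp
qed

text \<open>The weight outside \<open>H_S\<close> controls the entries of \<open>T\<^sup>n(\<rho>) - P T\<^sup>n(\<rho>) P\<close>.\<close>
lemma Bn_tendsto_0_GAS:
  assumes B0: "\<And>i j. i < d \<Longrightarrow> j < d \<Longrightarrow> (\<lambda>n. Bn n $$ (i,j)) \<longlonglongrightarrow> 0"
  shows "GAS d Ms P"
  unfolding GAS_def
proof (intro conjI invariant allI impI)
  fix \<rho> assume "density_op d \<rho>"
  hence \<rho>: "positive_op d \<rho>" and tr\<rho>: "mtrace \<rho> = 1" unfolding density_op_def by auto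
  have \<rho>c: "\<rho> \<in> carrier_mat d d" using \<rho> by (rule positive_op_carrier)
  define X where "X n = (Tm ^^ n) \<rho>" for n
  have X: "X n \<in> carrier_mat d d" for n unfolding X_def by (rule kraus_map_pow_carrier[OF Ms_carrier \<rho>c])
  have Xpos: "positive_op d (X n)" for n unfolding X_def by (rule kraus_map_pow_positive[OF Ms_carrier \<rho>])
  have trX: "mtrace (X n) = 1" for n
  proof -
    have "mtrace (X n) = mtrace (1\<^sub>m d * X n)" using X[of n] by simp
    also have "\<dots> = mtrace ((Td ^^ n) (1\<^sub>m d) * \<rho>)"
      unfolding X_def by (rule mtrace_kraus_dual_pow[OF Ms_carrier one_carrier_mat \<rho>c])
    also have "\<dots> = 1" using \<rho>c tr\<rho> by (simp add: kraus_dual_pow_one[OF kraus])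
    finally show ?thesis .
  qed
  have "(\<lambda>n. 2 * sqrt (Re (mtrace (Q * X n)) * 1)) \<longlonglongrightarrow> 2 * sqrt (0 * 1)"
    using Bn_tendsto_0_weight[OF B0 \<rho>c] unfolding X_def
    by (intro tendsto_mult tendsto_real_sqrt tendsto_const)
  hence bound: "(\<lambda>n. 2 * sqrt (Re (mtrace (Q * X n)) * Re (mtrace (X n)))) \<longlonglongrightarrow> 0"
    by (simp add: trX)
  have Y: "X n - P * X n * P \<in> carrier_mat d d" for n
    using X[of n] by (intro minus_carrier_mat mult_carrier_mat[of _ d d P]) auto
  have "(\<lambda>n. (X n - P * X n * P) $$ (i,j)) \<longlonglongrightarrow> 0" if i: "i < d" and j: "j < d" for i j
  proof -
    have "(\<lambda>n. norm ((X n - P * X n * P) $$ (i,j))) \<longlonglongrightarrow> 0"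
    proof (rule tendsto_sandwich[OF _ _ tendsto_const bound])
      show "\<forall>\<^sub>F n in sequentially. norm ((X n - P * X n * P) $$ (i,j))
          \<le> 2 * sqrt (Re (mtrace (Q * X n)) * Re (mtrace (X n)))"
        using off_block_entry_bound[OF Xpos i j] by simp
    qed simp
    thus ?thesis by (simp add: tendsto_norm_zero_iff)
  qed
  hence "(\<lambda>n. mnorm (X n - P * X n * P)) \<longlonglongrightarrow> 0" by (rule mnorm_tendsto_0[OF Y])
  thus "(\<lambda>n. mnorm ((Tm ^^ n) \<rho> - P * (Tm ^^ n) \<rho> * P)) \<longlonglongrightarrow> 0" unfolding X_def .
qed

theorem GAS_iff_nondegenerate: "GAS d Ms P \<longleftrightarrow> (\<exists>N. nondegenerate d (Pn N))"
proof
  assume "GAS d Ms P"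
  thus "\<exists>N. nondegenerate d (Pn N)" by (intro Bn_tendsto_0_nondegenerate GAS_Bn_tendsto_0)
next
  assume "\<exists>N. nondegenerate d (Pn N)"
  then obtain N where "nondegenerate d (Pn N)" ..
  thus "GAS d Ms P" by (intro Bn_tendsto_0_GAS nondegenerate_Bn_tendsto_0)
qed

end

theorem corollary2:
  fixes d :: nat and Ms :: "complex mat list" and P :: "complex mat"
  assumes "kraus_ops d Ms"
    and "orth_proj d P"
    and "invariant_sub d Ms (proj_range d P)"
  shows "GAS d Ms P \<longleftrightarrow>
    (\<exists>N. (\<forall>n < N. supp d ((kraus_dual d Ms ^^ n) P) \<subset> supp d ((kraus_dual d Ms ^^ Suc n) P))
         \<and> supp d ((kraus_dual d Ms ^^ N) P) = carrier_vec d)"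
proof -
  interpret invariant_projection d P Ms
    by unfold_locales (use assms in auto)
  have "GAS d Ms P \<longleftrightarrow>
    (\<exists>N. (\<forall>n<N. supp d (Pn n) \<subset> supp d (Pn (Suc n))) \<and> supp d (Pn N) = carrier_vec d)"
    unfolding GAS_iff_nondegenerate supp_chain_iff_nondegenerate ..
  thus ?thesis unfolding Pn_def .
qed

end
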